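(* Let $V$ be a function analytic in a disc $\{z:|z|<R\}$ and taking positive values on the interval $(0,R)$. Define $s(z)=\exp\left(\int\frac{dz}{V(z)}\right)$ and $b(z)=\exp\left(\int\frac{z\,dz}{V(z)}\right)$ (with arbitrary fixed antiderivatives), and $\tau(z)=z/s(z)$. Suppose $\tau(0)>0$ and that the numbers $$c_0=b(0),\qquad c_k=\frac{1}{(k+1)!}\left(\frac{d}{dz}\right)^k\Big(b'(\tau(z))\,(\tau(z))^{k+1}\Big)\Big|_{z=0},\quad k=1,2,\dots$$ are all non-negative. Then $V$ is the covariance of the power series distribution of the function $\omega$ defined by $\omega(y)=b(z)$ where $y=s(z)$ (i.e. $\omega=b\circ s^{-1}$).
   Context: For a power series $\omega(y)=\sum_k a_ky^k$ with non-negative coefficients and positive radius of convergence, the power series distribution (PSD) of $\omega$ with parameter $y>0$ is the law on $\{0,1,2,\dots\}$ given by $P\{\xi=k\}=a_ky^k/\omega(y)$. Its mean is $x(y)=y\omega'(y)/\omega(y)$ and its variance is $y\,x'(y)>0$, so $x(\cdot)$ has an inverse $y=f(x)$ on its range. The covariance of the PSD of $\omega$ is the function $V(x)=f(x)/f'(x)$, i.e. the variance expressed as a function of the mean $x$. Here $\tau(0)$ denotes the value at $0$ of the (analytically extended) function $z/s(z)$. *)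

theory Defs
  imports "HOL-Analysis.Analysis"
begin

definition ps_fun :: "(nat \<Rightarrow> real) \<Rightarrow> real \<Rightarrow> real" where
  "ps_fun a y = (\<Sum>k. a k * y ^ k)"

definition psd_mean :: "(nat \<Rightarrow> real) \<Rightarrow> real \<Rightarrow> real" where
  "psd_mean a y = y * deriv (ps_fun a) y / ps_fun a y"

definition psd_params :: "(nat \<Rightarrow> real) \<Rightarrow> real set" where
  "psd_params a = {y. 0 < y \<and> ereal y < conv_radius a}"

definition psd_cov :: "(nat \<Rightarrow> real) \<Rightarrow> real \<Rightarrow> real" where
  "psd_cov a x = (let f = inv_into (psd_params a) (psd_mean a) in f x / deriv f x)"

end

theory Submission
  imports Defs "HOL-Complex_Analysis.Complex_Analysis"
begin

(* Let tau z = z / s z, extended holomorphically to 0 by tau 0 = tau0 > 0, so that s = z / tau z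
   off 0 and z / tau z is injective near 0. The Lagrange-Burmann formula expands b as a power
   series in s z near 0; its coefficients are b 0, b'(0) tau0 = b 0 tau0 (the two ODEs give
   b' = b (tau - z tau') / tau) and the numbers c_k of the hypothesis, so omega, the power series
   with these coefficients, has nonnegative coefficients and satisfies b = omega o s near 0.
   On the segment (0, R) the equation s' = s / V with V > 0 forces s to be real, positive and
   increasing. By analytic continuation b = omega o s along the whole segment, as long as s stays
   inside the disc of convergence; Pringsheim's theorem (a series with nonnegative coefficients
   is singular at its positive radius point) shows that it does, because otherwise the local
   inverse of s would continue omega across that point. Differentiating b = omega o s gives
   x omega(s x) = s x omega'(s x): the distribution with parameter s x has mean x. The mean is a
   strictly increasing function of the parameter, so s is its inverse and V = s / s' is the
   covariance. *)

section \<open>Power series\<close>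

lemma funpow_diffs:
  fixes c :: "nat \<Rightarrow> 'a::real_normed_field"
  shows "(diffs ^^ n) c k = fact (k + n) / fact k * c (k + n)"
proof (induction n arbitrary: k)
  case (Suc n)
  have "(diffs ^^ Suc n) c k = of_nat (Suc k) * (diffs ^^ n) c (Suc k)"
    by (simp add: diffs_def)
  also have "\<dots> = fact (k + Suc n) / fact k * c (k + Suc n)"
    by (simp add: Suc.IH field_simps del: of_nat_Suc)
  finally show ?case .
qed simp

lemma conv_radius_diffs_ge:
  fixes c :: "nat \<Rightarrow> 'a::{banach,real_normed_field}"
  shows "conv_radius c \<le> conv_radius (diffs c)"
  using fps_conv_radius_deriv[of "Abs_fps c"]
  by (simp add: fps_conv_radius_def fps_deriv_def diffs_def)

lemma conv_radius_funpow_diffs_ge: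
  fixes c :: "nat \<Rightarrow> 'a::{banach,real_normed_field}"
  shows "conv_radius c \<le> conv_radius ((diffs ^^ n) c)"
  by (induction n) (auto intro: order_trans conv_radius_diffs_ge)

lemma funpow_diffs_of_real:
  "(diffs ^^ n) (\<lambda>k. of_real (a k) :: 'a::real_normed_field) = (\<lambda>k. of_real ((diffs ^^ n) a k))"
  by (induction n) (simp_all add: diffs_of_real)

lemma higher_deriv_powser:
  fixes c :: "nat \<Rightarrow> complex"
  assumes "ereal (norm y) < conv_radius c"
  shows "(deriv ^^ n) (\<lambda>y. \<Sum>k. c k * y ^ k) y = (\<Sum>k. (diffs ^^ n) c k * y ^ k)"
  using assms
proof (induction n arbitrary: c)
  case (Suc n)
  have "eventually (\<lambda>z. z \<in> eball 0 (conv_radius c)) (nhds y)"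
    using Suc.prems by (intro eventually_nhds_in_open) auto
  then have "eventually (\<lambda>z. deriv (\<lambda>y. \<Sum>k. c k * y ^ k) z = (\<Sum>k. diffs c k * z ^ k)) (nhds y)"
    by eventually_elim (auto intro!: DERIV_imp_deriv has_field_derivative_powser)
  then have "(deriv ^^ Suc n) (\<lambda>y. \<Sum>k. c k * y ^ k) y = (deriv ^^ n) (\<lambda>z. \<Sum>k. diffs c k * z ^ k) y"
    unfolding funpow_Suc_right o_def by (intro higher_deriv_cong_ev refl)
  also have "\<dots> = (\<Sum>k. (diffs ^^ Suc n) c k * y ^ k)"
    using Suc.prems conv_radius_diffs_ge[of c]
    by (subst Suc.IH) (auto simp: funpow_Suc_right simp del: funpow.simps)
  finally show ?case .
qed simp

lemma holomorphic_on_powser: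
  fixes c :: "nat \<Rightarrow> complex"
  shows "(\<lambda>w. \<Sum>k. c k * w ^ k) holomorphic_on eball 0 (conv_radius c)"
  using has_field_derivative_powser[of _ c UNIV]
  by (fastforce simp: holomorphic_on_open in_eball_iff dist_norm)

lemma powser_has_real_derivative:
  fixes a :: "nat \<Rightarrow> real"
  assumes "ereal \<bar>t\<bar> < conv_radius a"
  shows "((\<lambda>t. \<Sum>k. a k * t ^ k) has_real_derivative (\<Sum>k. diffs a k * t ^ k)) (at t)"
  using has_field_derivative_powser[of t a UNIV] assms by simp

section \<open>Pringsheim's theorem\<close>

lemma binomial_powser_partial_sum_le:
  fixes a :: "nat \<Rightarrow> real"
  assumes nonneg: "\<And>k. 0 \<le> a k" and "0 \<le> y" "0 \<le> h"
  shows "(\<Sum>m<N. a m * (y + h) ^ m)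
           \<le> (\<Sum>j<N. (\<Sum>i<N. a (i + j) * of_nat ((i + j) choose i) * y ^ i) * h ^ j)"
proof -
  define g where "g i j = a (i + j) * of_nat ((i + j) choose i) * y ^ i * h ^ j" for i j
  have "(\<Sum>m<N. a m * (y + h) ^ m) = (\<Sum>m<N. \<Sum>i\<le>m. g i (m - i))"
    by (simp add: g_def binomial_ring sum_distrib_left mult_ac)
  also have "\<dots> = (\<Sum>(i, j) \<in> {(i, j). i + j < N}. g i j)"
    by (rule sum.triangle_reindex[symmetric])
  also have "\<dots> \<le> (\<Sum>(i, j) \<in> {..<N} \<times> {..<N}. g i j)"
    using assms by (intro sum_mono2) (auto simp: g_def)
  also have "\<dots> = (\<Sum>i<N. \<Sum>j<N. g i j)"
    by (rule sum.cartesian_product[symmetric])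
  also have "\<dots> = (\<Sum>j<N. \<Sum>i<N. g i j)"
    by (rule sum.swap)
  also have "\<dots> = (\<Sum>j<N. (\<Sum>i<N. a (i + j) * of_nat ((i + j) choose i) * y ^ i) * h ^ j)"
    by (simp add: g_def sum_distrib_right)
  finally show ?thesis .
qed

lemma nonneg_powser_summable_from_Taylor:
  fixes a :: "nat \<Rightarrow> real"
  assumes nonneg: "\<And>k. 0 \<le> a k" and y: "0 \<le> y" "ereal y < conv_radius a" and h: "0 \<le> h"
    and Taylor: "summable (\<lambda>n. (\<Sum>k. (diffs ^^ n) a k * y ^ k) / fact n * h ^ n)"
  shows "summable (\<lambda>m. a m * (y + h) ^ m)"
proof -
  define d where "d n = (\<Sum>k. (diffs ^^ n) a k * y ^ k) / fact n" for n
  have summable_diffs: "summable (\<lambda>k. (diffs ^^ n) a k * y ^ k)" for n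
    using y conv_radius_funpow_diffs_ge[of a n] by (intro summable_in_conv_radius) auto
  have d_nonneg: "0 \<le> d n" for n
    unfolding d_def using nonneg y
    by (intro divide_nonneg_pos suminf_nonneg summable_diffs) (auto simp: funpow_diffs)
  have summable_d: "summable (\<lambda>n. d n * h ^ n)"
    using Taylor by (simp add: d_def)
  have inner_le: "(\<Sum>i<N. a (i + j) * of_nat ((i + j) choose i) * y ^ i) \<le> d j" for N j
  proof -
    have "of_nat ((i + j) choose i) = (fact (i + j) / (fact i * fact j) :: real)" for i
      using binomial_fact[of i "i + j"] by simp
    then have "(\<Sum>i<N. a (i + j) * of_nat ((i + j) choose i) * y ^ i)
        = (\<Sum>i<N. (diffs ^^ j) a i * y ^ i) / fact j"
      by (simp add: sum_divide_distrib funpow_diffs mult_ac)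
    also have "\<dots> \<le> d j"
      unfolding d_def using nonneg y
      by (intro divide_right_mono sum_le_suminf summable_diffs) (auto simp: funpow_diffs)
    finally show ?thesis .
  qed
  show ?thesis
  proof (rule bounded_imp_summable)
    show "0 \<le> a m * (y + h) ^ m" for m
      using nonneg y h by simp
    have partial_le: "(\<Sum>m<N. a m * (y + h) ^ m) \<le> (\<Sum>n. d n * h ^ n)" for N
    proof -
      have "(\<Sum>m<N. a m * (y + h) ^ m)
          \<le> (\<Sum>j<N. (\<Sum>i<N. a (i + j) * of_nat ((i + j) choose i) * y ^ i) * h ^ j)"
        by (rule binomial_powser_partial_sum_le[OF nonneg y(1) h])
      also have "\<dots> \<le> (\<Sum>j<N. d j * h ^ j)"
        using inner_le h by (intro sum_mono mult_right_mono) auto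
      also have "\<dots> \<le> (\<Sum>n. d n * h ^ n)"
        using summable_d d_nonneg h by (intro sum_le_suminf) auto
      finally show ?thesis .
    qed
    show "(\<Sum>m\<le>N. a m * (y + h) ^ m) \<le> (\<Sum>n. d n * h ^ n)" for N
      using partial_le[of "Suc N"] by (simp add: lessThan_Suc_atMost)
  qed
qed

lemma holomorphic_eq_powser_from_real_interval:
  fixes c :: "nat \<Rightarrow> complex" and F :: "complex \<Rightarrow> complex" and \<rho> \<epsilon> w0 :: real
  assumes radius: "ereal \<rho> \<le> conv_radius c" "0 < \<rho>"
    and holF: "F holomorphic_on ball (of_real \<rho>) \<epsilon>" and "0 < \<epsilon>" and "w0 < \<rho>"
    and eq: "\<And>w. w0 < w \<Longrightarrow> w < \<rho> \<Longrightarrow> F (of_real w) = (\<Sum>k. c k * of_real w ^ k)"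
    and w: "w \<in> ball 0 \<rho> \<inter> ball (of_real \<rho>) \<epsilon>"
  shows "F w = (\<Sum>k. c k * w ^ k)"
proof -
  define W where "W = ball 0 \<rho> \<inter> ball (complex_of_real \<rho>) \<epsilon>"
  define P where "P w = (\<Sum>k. c k * w ^ k)" for w
  define w1 where "w1 = max w0 (max 0 (\<rho> - \<epsilon> / 2))"
  have w1: "w0 \<le> w1" "0 \<le> w1" "\<rho> - \<epsilon> / 2 \<le> w1" "w1 < \<rho>"
    using \<open>w0 < \<rho>\<close> radius \<open>0 < \<epsilon>\<close> by (auto simp: w1_def)
  have real_interval_W: "of_real ` {w1<..<\<rho>} \<subseteq> W" and w1_W: "complex_of_real w1 \<in> W"
    using w1 \<open>0 < \<epsilon>\<close> by (auto simp: W_def dist_norm simp flip: of_real_diff)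
  have "complex_of_real w1 islimpt of_real ` {w1<..<\<rho>}"
  proof (rule islimpt_image[where g = complex_of_real and B = UNIV])
    show "w1 islimpt complex_of_real -` of_real ` {w1<..<\<rho>} \<inter> UNIV"
      using islimpt_greaterThanLessThan1[OF w1(4)] by (simp add: inj_vimage_image_eq inj_of_real)
  qed (auto intro: continuous_on_of_real_id)
  moreover have "ball 0 \<rho> \<subseteq> eball 0 (conv_radius c)"
    by (auto simp: in_eball_iff intro!: less_le_trans[OF _ radius(1)])
  then have "P holomorphic_on W"
    using holomorphic_on_powser[of c] unfolding P_def[abs_def] W_def
    by (elim holomorphic_on_subset) auto
  then have "(\<lambda>w. F w - P w) holomorphic_on W"
    using holomorphic_on_subset[OF holF] by (auto simp: W_def intro!: holomorphic_intros)
  moreover have "F z - P z = 0" if "z \<in> of_real ` {w1<..<\<rho>}" for z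
    using that w1 by (auto simp: eq P_def)
  moreover have "open W" "connected W"
    by (auto simp: W_def convex_connected convex_Int)
  moreover have "w \<in> W"
    using w by (simp add: W_def)
  ultimately have "F w - P w = 0"
    using analytic_continuation real_interval_W w1_W by blast
  then show ?thesis
    by (simp add: P_def)
qed

theorem nonneg_powser_no_holomorphic_extension:
  fixes a :: "nat \<Rightarrow> real" and F :: "complex \<Rightarrow> complex" and \<rho> \<epsilon> w0 :: real
  assumes nonneg: "\<And>k. 0 \<le> a k" and radius: "conv_radius a = ereal \<rho>" "0 < \<rho>"
    and holF: "F holomorphic_on ball (of_real \<rho>) \<epsilon>" and "0 < \<epsilon>" and "w0 < \<rho>"
    and eq: "\<And>w. w0 < w \<Longrightarrow> w < \<rho> \<Longrightarrow> F (of_real w) = (\<Sum>k. of_real (a k) * of_real w ^ k)"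
  shows False
proof -
  define c where "c = (\<lambda>k. complex_of_real (a k))"
  have conv_radius_c: "conv_radius c = \<rho>"
    using conv_radius_norm[of c] nonneg radius by (simp add: c_def)
  define \<eta> where "\<eta> = min (\<epsilon> / 3) (\<rho> / 2)"
  have \<eta>: "0 < \<eta>" "3 * \<eta> \<le> \<epsilon>" "2 * \<eta> \<le> \<rho>"
    using \<open>0 < \<epsilon>\<close> radius by (auto simp: \<eta>_def)
  define y where "y = \<rho> - \<eta>"
  define h where "h = 3 * \<eta> / 2"
  have y: "0 < y" "ereal y < conv_radius a"
    using \<eta> radius by (auto simp: y_def)
  have summable_diffs: "summable (\<lambda>k. (diffs ^^ n) a k * y ^ k)" for n
    using y conv_radius_funpow_diffs_ge[of a n] by (intro summable_in_conv_radius) auto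
  have eq_c: "F (of_real w) = (\<Sum>k. c k * of_real w ^ k)" if "w0 < w" "w < \<rho>" for w
    using eq[OF that] by (simp add: c_def)
  have "eventually (\<lambda>w. w \<in> ball 0 \<rho> \<inter> ball (of_real \<rho>) \<epsilon>) (nhds (complex_of_real y))"
    using \<eta> by (intro eventually_nhds_in_open) (auto simp: y_def dist_norm simp flip: of_real_diff)
  then have F_eq: "eventually (\<lambda>w. F w = (\<Sum>k. c k * w ^ k)) (nhds (complex_of_real y))"
    by eventually_elim
       (rule holomorphic_eq_powser_from_real_interval[OF _ radius(2) holF \<open>0 < \<epsilon>\<close> \<open>w0 < \<rho>\<close> eq_c],
        simp_all add: conv_radius_c)
  have higher_deriv_F: "(deriv ^^ n) F (of_real y) = of_real (\<Sum>k. (diffs ^^ n) a k * y ^ k)" for n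
  proof -
    have "(deriv ^^ n) F (of_real y) = (deriv ^^ n) (\<lambda>w. \<Sum>k. c k * w ^ k) (of_real y)"
      using F_eq by (rule higher_deriv_cong_ev[OF _ refl])
    also have "\<dots> = (\<Sum>k. (diffs ^^ n) c k * of_real y ^ k)"
      using y conv_radius_c radius by (intro higher_deriv_powser) auto
    also have "\<dots> = of_real (\<Sum>k. (diffs ^^ n) a k * y ^ k)"
      by (simp add: c_def funpow_diffs_of_real suminf_of_real[OF summable_diffs])
    finally show ?thesis .
  qed
  have "ball (complex_of_real y) (2 * \<eta>) \<subseteq> ball (of_real \<rho>) \<epsilon>"
    using \<eta> by (subst ball_subset_ball_iff) (auto simp: y_def dist_norm simp flip: of_real_diff)
  then have "(\<lambda>n. (deriv ^^ n) F (of_real y) / fact n * (of_real (y + h) - of_real y) ^ n)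
      sums F (of_real (y + h))"
    using \<eta> by (intro holomorphic_power_series holomorphic_on_subset[OF holF])
      (auto simp: h_def dist_norm simp flip: of_real_diff)
  then have "summable (\<lambda>n. complex_of_real ((\<Sum>k. (diffs ^^ n) a k * y ^ k) / fact n * h ^ n))"
    by (simp add: higher_deriv_F sums_summable)
  then have "summable (\<lambda>m. a m * (y + h) ^ m)"
    using nonneg y \<eta> unfolding summable_complex_of_real
    by (intro nonneg_powser_summable_from_Taylor) (auto simp: h_def)
  then have "ereal (norm (y + h)) \<le> conv_radius a"
    by (rule conv_radius_geI)
  then show False
    using radius \<eta> by (simp add: y_def h_def abs_if split: if_splits)
qed

section \<open>The Lagrange-Burmann expansion\<close>

lemma sums_contour_integral_circlepath:
  fixes g :: "nat \<Rightarrow> complex \<Rightarrow> complex"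
  assumes "0 < r" and integrable: "\<And>n. g n contour_integrable_on circlepath z r"
    and unif: "uniform_limit (sphere z r) (\<lambda>N \<zeta>. \<Sum>n<N. g n \<zeta>) (\<lambda>\<zeta>. \<Sum>n. g n \<zeta>) sequentially"
  shows "(\<lambda>n. contour_integral (circlepath z r) (g n))
           sums contour_integral (circlepath z r) (\<lambda>\<zeta>. \<Sum>n. g n \<zeta>)"
proof -
  have "eventually (\<lambda>N. (\<lambda>\<zeta>. \<Sum>n<N. g n \<zeta>) contour_integrable_on circlepath z r) sequentially"
    using integrable by (intro always_eventually allI contour_integrable_sum) auto
  then have "(\<lambda>N. contour_integral (circlepath z r) (\<lambda>\<zeta>. \<Sum>n<N. g n \<zeta>))
      \<longlonglongrightarrow> contour_integral (circlepath z r) (\<lambda>\<zeta>. \<Sum>n. g n \<zeta>)"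
    using \<open>0 < r\<close> by (intro contour_integral_uniform_limit_circlepath[OF _ unif]) auto
  then show ?thesis
    unfolding sums_def using integrable by (simp add: contour_integral_sum)
qed

lemma uniform_limit_geometric_kernel:
  fixes f \<sigma> :: "complex \<Rightarrow> complex" and q :: complex
  assumes "compact K" and cont_f: "continuous_on K f"
    and \<sigma>_ge: "\<And>\<zeta>. \<zeta> \<in> K \<Longrightarrow> m \<le> norm (\<sigma> \<zeta>)" and q: "norm q < m"
  shows "uniform_limit K (\<lambda>N \<zeta>. \<Sum>n<N. f \<zeta> / \<sigma> \<zeta> ^ Suc n * q ^ n)
           (\<lambda>\<zeta>. \<Sum>n. f \<zeta> / \<sigma> \<zeta> ^ Suc n * q ^ n) sequentially"
proof -
  have m: "0 < m"
    using q norm_ge_zero[of q] by linarith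
  obtain B where B: "\<And>\<zeta>. \<zeta> \<in> K \<Longrightarrow> norm (f \<zeta>) \<le> B"
    using compact_imp_bounded[OF compact_continuous_image[OF cont_f \<open>compact K\<close>]]
    by (force simp: bounded_iff)
  show ?thesis
  proof (rule Weierstrass_m_test)
    show "norm (f \<zeta> / \<sigma> \<zeta> ^ Suc n * q ^ n) \<le> B / m * (norm q / m) ^ n" if "\<zeta> \<in> K" for n \<zeta>
    proof -
      have "norm (f \<zeta> / \<sigma> \<zeta> ^ Suc n * q ^ n) = norm (f \<zeta>) * norm q ^ n / norm (\<sigma> \<zeta>) ^ Suc n"
        by (simp add: norm_mult norm_divide norm_power)
      also have "\<dots> \<le> B * norm q ^ n / m ^ Suc n"
        using B[OF that] \<sigma>_ge[OF that] m order_trans[OF norm_ge_zero B[OF that]]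
        by (intro frac_le mult_right_mono power_mono) auto
      also have "\<dots> = B / m * (norm q / m) ^ n"
        by (simp add: power_divide)
      finally show ?thesis .
    qed
    show "summable (\<lambda>n. B / m * (norm q / m) ^ n)"
      using q m by (intro summable_mult summable_geometric) auto
  qed
qed

lemma sums_contour_integral_geometric:
  fixes f \<sigma> :: "complex \<Rightarrow> complex" and q :: complex
  assumes "0 < r" and cont_f: "continuous_on (sphere z r) f"
    and cont_\<sigma>: "continuous_on (sphere z r) \<sigma>"
    and \<sigma>_ge: "\<And>\<zeta>. \<zeta> \<in> sphere z r \<Longrightarrow> m \<le> norm (\<sigma> \<zeta>)" and q: "norm q < m"
  shows "(\<lambda>n. contour_integral (circlepath z r) (\<lambda>\<zeta>. f \<zeta> / \<sigma> \<zeta> ^ Suc n) * q ^ n)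
           sums contour_integral (circlepath z r) (\<lambda>\<zeta>. f \<zeta> / (\<sigma> \<zeta> - q))"
proof -
  define g where "g n \<zeta> = f \<zeta> / \<sigma> \<zeta> ^ Suc n * q ^ n" for n \<zeta>
  have \<sigma>_nz: "\<sigma> \<zeta> \<noteq> 0" and \<sigma>_ne_q: "\<sigma> \<zeta> \<noteq> q" if "\<zeta> \<in> sphere z r" for \<zeta>
    using \<sigma>_ge[OF that] q norm_ge_zero[of q] by (auto simp del: norm_ge_zero)
  have integrable: "(\<lambda>\<zeta>. f \<zeta> / \<sigma> \<zeta> ^ Suc n) contour_integrable_on circlepath z r" for n
    using \<open>0 < r\<close> cont_f cont_\<sigma> \<sigma>_nz
    by (intro contour_integrable_continuous_circlepath continuous_intros) auto
  have "(\<lambda>n. contour_integral (circlepath z r) (g n))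
      sums contour_integral (circlepath z r) (\<lambda>\<zeta>. \<Sum>n. g n \<zeta>)"
    unfolding g_def[abs_def]
    using \<open>0 < r\<close> integrable uniform_limit_geometric_kernel[OF compact_sphere cont_f \<sigma>_ge q]
    by (intro sums_contour_integral_circlepath contour_integrable_rmul) auto
  moreover have "(\<Sum>n. g n \<zeta>) = f \<zeta> / (\<sigma> \<zeta> - q)" if "\<zeta> \<in> sphere z r" for \<zeta>
  proof -
    have "norm (q / \<sigma> \<zeta>) < 1"
      using q \<sigma>_ge[OF that] \<sigma>_nz[OF that] by (simp add: norm_divide divide_less_eq)
    then have "(\<lambda>n. f \<zeta> / \<sigma> \<zeta> * (q / \<sigma> \<zeta>) ^ n) sums (f \<zeta> / \<sigma> \<zeta> * (1 / (1 - q / \<sigma> \<zeta>)))"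
      by (intro sums_mult geometric_sums)
    then show ?thesis
      using \<sigma>_nz[OF that] \<sigma>_ne_q[OF that]
      by (simp add: sums_iff g_def power_divide field_simps)
  qed
  then have "contour_integral (circlepath z r) (\<lambda>\<zeta>. \<Sum>n. g n \<zeta>)
      = contour_integral (circlepath z r) (\<lambda>\<zeta>. f \<zeta> / (\<sigma> \<zeta> - q))"
    using \<open>0 < r\<close> by (intro contour_integral_eq) auto
  moreover have "contour_integral (circlepath z r) (g n)
      = contour_integral (circlepath z r) (\<lambda>\<zeta>. f \<zeta> / \<sigma> \<zeta> ^ Suc n) * q ^ n" for n
    unfolding g_def by (rule contour_integral_rmul[OF integrable])
  ultimately show ?thesis
    by simp
qed

lemma contour_integral_inverse_kernel:
  fixes b \<sigma> :: "complex \<Rightarrow> complex"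
  assumes hol_b: "b holomorphic_on S" and hol_\<sigma>: "\<sigma> holomorphic_on S" and "open S"
    and inj: "inj_on \<sigma> S" and sub: "cball z r \<subseteq> S" and w: "w \<in> ball z r"
  shows "contour_integral (circlepath z r) (\<lambda>\<zeta>. b \<zeta> * deriv \<sigma> \<zeta> / (\<sigma> \<zeta> - \<sigma> w)) = 2 * pi * \<i> * b w"
proof -
  have wS: "w \<in> S"
    using w sub by auto
  define Q where "Q \<zeta> = (if \<zeta> = w then deriv \<sigma> w else (\<sigma> \<zeta> - \<sigma> w) / (\<zeta> - w))" for \<zeta>
  have hol_Q: "Q holomorphic_on S"
    unfolding Q_def[abs_def] using \<open>open S\<close> wS by (intro pole_lemma[OF hol_\<sigma>]) (auto simp: interior_open)
  have Q_nz: "Q \<zeta> \<noteq> 0" if "\<zeta> \<in> S" for \<zeta>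
    using holomorphic_injective_imp_regular[OF hol_\<sigma> \<open>open S\<close> inj wS] inj_onD[OF inj _ that wS]
    by (auto simp: Q_def)
  define k where "k \<zeta> = b \<zeta> * deriv \<sigma> \<zeta> / Q \<zeta>" for \<zeta>
  have "k holomorphic_on S"
    unfolding k_def[abs_def] using hol_b hol_\<sigma> hol_Q Q_nz \<open>open S\<close>
    by (intro holomorphic_intros holomorphic_deriv) auto
  then have "((\<lambda>\<zeta>. k \<zeta> / (\<zeta> - w)) has_contour_integral (2 * of_real pi * \<i> * k w)) (circlepath z r)"
    using w sub
    by (intro Cauchy_integral_circlepath holomorphic_on_imp_continuous_on)
       (auto simp: dist_norm norm_minus_commute elim!: holomorphic_on_subset)
  moreover have "k \<zeta> / (\<zeta> - w) = b \<zeta> * deriv \<sigma> \<zeta> / (\<sigma> \<zeta> - \<sigma> w)" if "\<zeta> \<in> path_image (circlepath z r)" for \<zeta>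
  proof -
    have "\<zeta> \<noteq> w"
      using that w by auto
    then show ?thesis
      by (simp add: k_def Q_def)
  qed
  ultimately have "((\<lambda>\<zeta>. b \<zeta> * deriv \<sigma> \<zeta> / (\<sigma> \<zeta> - \<sigma> w)) has_contour_integral (2 * pi * \<i> * b w)) (circlepath z r)"
    using Q_nz[OF wS] by (auto simp: k_def Q_def elim!: has_contour_integral_eq)
  then show ?thesis
    by (rule contour_integral_unique)
qed

definition lagrange_coeff :: "(complex \<Rightarrow> complex) \<Rightarrow> (complex \<Rightarrow> complex) \<Rightarrow> nat \<Rightarrow> complex" where
  "lagrange_coeff b \<tau> n =
     (if n = 0 then b 0 else (deriv ^^ (n - 1)) (\<lambda>z. deriv b z * \<tau> z ^ n) 0 / fact n)"

lemma contour_integral_lagrange_coeff_0: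
  fixes b \<tau> :: "complex \<Rightarrow> complex"
  assumes hol_b: "b holomorphic_on ball 0 R" and hol_\<tau>: "\<tau> holomorphic_on ball 0 R"
    and \<tau>_nz: "\<And>z. z \<in> ball 0 R \<Longrightarrow> \<tau> z \<noteq> 0" and r: "0 < r" "r < R"
  shows "contour_integral (circlepath 0 r) (\<lambda>\<zeta>. b \<zeta> * deriv (\<lambda>z. z / \<tau> z) \<zeta> / (\<zeta> / \<tau> \<zeta>))
           = 2 * pi * \<i> * b 0"
proof -
  have "((\<lambda>\<zeta>. b \<zeta> / (\<zeta> - 0)) has_contour_integral (2 * of_real pi * \<i> * b 0)) (circlepath 0 r)"
    using hol_b r
    by (intro Cauchy_integral_circlepath holomorphic_on_imp_continuous_on)
       (auto elim!: holomorphic_on_subset)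
  moreover have "((\<lambda>\<zeta>. b \<zeta> * deriv \<tau> \<zeta> / \<tau> \<zeta>) has_contour_integral 0) (circlepath 0 r)"
    using hol_b hol_\<tau> \<tau>_nz r
    by (intro Cauchy_theorem_disc_simple[of _ 0 R] holomorphic_intros holomorphic_deriv) auto
  ultimately have "((\<lambda>\<zeta>. b \<zeta> / (\<zeta> - 0) - b \<zeta> * deriv \<tau> \<zeta> / \<tau> \<zeta>) has_contour_integral
      (2 * pi * \<i> * b 0)) (circlepath 0 r)"
    using has_contour_integral_diff by fastforce
  moreover have "b \<zeta> / (\<zeta> - 0) - b \<zeta> * deriv \<tau> \<zeta> / \<tau> \<zeta> = b \<zeta> * deriv (\<lambda>z. z / \<tau> z) \<zeta> / (\<zeta> / \<tau> \<zeta>)"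
    if "\<zeta> \<in> path_image (circlepath 0 r)" for \<zeta>
  proof -
    have \<zeta>: "\<zeta> \<in> ball 0 R" "\<zeta> \<noteq> 0"
      using that r by auto
    have "((\<lambda>z. z / \<tau> z) has_field_derivative (\<tau> \<zeta> - \<zeta> * deriv \<tau> \<zeta>) / \<tau> \<zeta> ^ 2) (at \<zeta>)"
      using \<tau>_nz[OF \<zeta>(1)] holomorphic_derivI[OF hol_\<tau> open_ball \<zeta>(1)]
      by (auto intro!: derivative_eq_intros simp: power2_eq_square)
    then show ?thesis
      using \<tau>_nz[OF \<zeta>(1)] \<zeta>(2) by (simp add: DERIV_imp_deriv field_simps power2_eq_square)
  qed
  ultimately show ?thesis
    by (intro contour_integral_unique) (rule has_contour_integral_eq)
qed

lemma has_contour_integral_div_power_by_parts: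
  fixes b \<sigma> :: "complex \<Rightarrow> complex"
  assumes hol_b: "b holomorphic_on S" and hol_\<sigma>: "\<sigma> holomorphic_on S" and "open S"
    and \<sigma>_nz: "\<And>z. z \<in> S \<Longrightarrow> \<sigma> z \<noteq> 0"
    and \<gamma>: "valid_path \<gamma>" "path_image \<gamma> \<subseteq> S" "pathfinish \<gamma> = pathstart \<gamma>"
    and I: "((\<lambda>z. deriv b z / \<sigma> z ^ Suc n) has_contour_integral I) \<gamma>"
  shows "((\<lambda>z. b z * deriv \<sigma> z / \<sigma> z ^ Suc (Suc n)) has_contour_integral I / of_nat (Suc n)) \<gamma>"
proof -
  define m where "m = Suc n"
  define \<Phi>' where "\<Phi>' z = deriv b z / \<sigma> z ^ m - of_nat m * b z * deriv \<sigma> z / \<sigma> z ^ Suc m" for z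
  have "((\<lambda>z. b z / \<sigma> z ^ m) has_field_derivative \<Phi>' z) (at z within S)" if "z \<in> S" for z
  proof -
    have "((\<lambda>z. b z / \<sigma> z ^ m) has_field_derivative
        (deriv b z * \<sigma> z ^ m - of_nat m * (deriv \<sigma> z * \<sigma> z ^ (m - Suc 0)) * b z)
          / (\<sigma> z ^ m) ^ Suc (Suc 0)) (at z)"
      using \<sigma>_nz[OF that] by (intro DERIV_quotient DERIV_power holomorphic_derivI[OF _ \<open>open S\<close> that]
          hol_b hol_\<sigma>) auto
    also have "(deriv b z * \<sigma> z ^ m - of_nat m * (deriv \<sigma> z * \<sigma> z ^ (m - Suc 0)) * b z)
          / (\<sigma> z ^ m) ^ Suc (Suc 0) = \<Phi>' z"
      using \<sigma>_nz[OF that] by (simp add: \<Phi>'_def m_def field_simps del: of_nat_Suc)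
    finally show ?thesis
      by (rule has_field_derivative_at_within)
  qed
  then have "(\<Phi>' has_contour_integral 0) \<gamma>"
    using \<gamma> by (intro Cauchy_theorem_primitive[where S = S]) auto
  with I have "((\<lambda>z. (deriv b z / \<sigma> z ^ m - \<Phi>' z) / of_nat m) has_contour_integral
      (I - 0) / of_nat m) \<gamma>"
    by (intro has_contour_integral_div has_contour_integral_diff) (simp_all add: m_def)
  then show ?thesis
    by (simp add: \<Phi>'_def m_def del: of_nat_Suc)
qed

lemma contour_integral_lagrange_coeff_Suc:
  fixes b \<tau> :: "complex \<Rightarrow> complex"
  assumes hol_b: "b holomorphic_on ball 0 R" and hol_\<tau>: "\<tau> holomorphic_on ball 0 R"
    and \<tau>_nz: "\<And>z. z \<in> ball 0 R \<Longrightarrow> \<tau> z \<noteq> 0" and r: "0 < r" "r < R"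
  shows "contour_integral (circlepath 0 r) (\<lambda>\<zeta>. b \<zeta> * deriv (\<lambda>z. z / \<tau> z) \<zeta> / (\<zeta> / \<tau> \<zeta>) ^ Suc (Suc n))
           = 2 * pi * \<i> * ((deriv ^^ n) (\<lambda>z. deriv b z * \<tau> z ^ Suc n) 0 / fact (Suc n))"
proof -
  define \<sigma> where "\<sigma> z = z / \<tau> z" for z
  define S where "S = ball (0::complex) R - {0}"
  have "(\<lambda>z. deriv b z * \<tau> z ^ Suc n) holomorphic_on ball 0 R"
    using hol_b hol_\<tau> by (intro holomorphic_intros holomorphic_deriv) auto
  then have "((\<lambda>\<zeta>. (deriv b \<zeta> * \<tau> \<zeta> ^ Suc n) / (\<zeta> - 0) ^ Suc n) has_contour_integral
      (2 * pi * \<i> / fact n * (deriv ^^ n) (\<lambda>z. deriv b z * \<tau> z ^ Suc n) 0)) (circlepath 0 r)"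
    using r by (intro Cauchy_has_contour_integral_higher_derivative_circlepath
        holomorphic_on_imp_continuous_on) (auto elim!: holomorphic_on_subset)
  then have "((\<lambda>\<zeta>. deriv b \<zeta> / \<sigma> \<zeta> ^ Suc n) has_contour_integral
      (2 * pi * \<i> / fact n * (deriv ^^ n) (\<lambda>z. deriv b z * \<tau> z ^ Suc n) 0)) (circlepath 0 r)"
    using r by (elim has_contour_integral_eq) (auto simp: \<sigma>_def power_divide)
  then have "((\<lambda>\<zeta>. b \<zeta> * deriv \<sigma> \<zeta> / \<sigma> \<zeta> ^ Suc (Suc n)) has_contour_integral
      (2 * pi * \<i> / fact n * (deriv ^^ n) (\<lambda>z. deriv b z * \<tau> z ^ Suc n) 0) / of_nat (Suc n)) (circlepath 0 r)"
    using hol_b hol_\<tau> \<tau>_nz r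
    by (intro has_contour_integral_div_power_by_parts[where S = S])
       (auto simp: S_def \<sigma>_def[abs_def] intro!: holomorphic_intros elim!: holomorphic_on_subset)
  then show ?thesis
    unfolding \<sigma>_def[abs_def] by (intro contour_integral_unique) (simp add: field_simps)
qed

lemma contour_integral_lagrange_coeff:
  fixes b \<tau> :: "complex \<Rightarrow> complex"
  assumes "b holomorphic_on ball 0 R" and "\<tau> holomorphic_on ball 0 R"
    and "\<And>z. z \<in> ball 0 R \<Longrightarrow> \<tau> z \<noteq> 0" and "0 < r" "r < R"
  shows "contour_integral (circlepath 0 r) (\<lambda>\<zeta>. b \<zeta> * deriv (\<lambda>z. z / \<tau> z) \<zeta> / (\<zeta> / \<tau> \<zeta>) ^ Suc n)
           = 2 * pi * \<i> * lagrange_coeff b \<tau> n"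
proof (cases n)
  case 0
  then show ?thesis
    using contour_integral_lagrange_coeff_0[OF assms] by (simp add: lagrange_coeff_def)
next
  case (Suc k)
  then show ?thesis
    using contour_integral_lagrange_coeff_Suc[OF assms, of k] by (simp add: lagrange_coeff_def)
qed

theorem lagrange_burmann:
  fixes b \<tau> :: "complex \<Rightarrow> complex"
  assumes "0 < R" and hol_b: "b holomorphic_on ball 0 R" and hol_\<tau>: "\<tau> holomorphic_on ball 0 R"
    and \<tau>_nz: "\<And>z. z \<in> ball 0 R \<Longrightarrow> \<tau> z \<noteq> 0" and inj: "inj_on (\<lambda>z. z / \<tau> z) (ball 0 R)"
  shows "\<exists>\<epsilon>>0. \<forall>z. norm z < \<epsilon> \<longrightarrow> (\<lambda>n. lagrange_coeff b \<tau> n * (z / \<tau> z) ^ n) sums b z"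
proof -
  define \<sigma> where "\<sigma> z = z / \<tau> z" for z
  define r where "r = R / 2"
  have r: "0 < r" "r < R" "cball 0 r \<subseteq> ball (0::complex) R"
    using \<open>0 < R\<close> by (auto simp: r_def)
  have hol_\<sigma>: "\<sigma> holomorphic_on ball 0 R"
    unfolding \<sigma>_def[abs_def] using hol_\<tau> \<tau>_nz by (intro holomorphic_intros) auto
  have cont_\<sigma>: "continuous_on (sphere 0 r) \<sigma>"
    using r by (intro holomorphic_on_imp_continuous_on holomorphic_on_subset[OF hol_\<sigma>]) auto
  have "(\<lambda>\<zeta>. b \<zeta> * deriv \<sigma> \<zeta>) holomorphic_on ball 0 R"
    using hol_b hol_\<sigma> by (intro holomorphic_intros holomorphic_deriv) auto
  then have cont_f: "continuous_on (sphere 0 r) (\<lambda>\<zeta>. b \<zeta> * deriv \<sigma> \<zeta>)"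
    using r by (intro holomorphic_on_imp_continuous_on) (auto elim!: holomorphic_on_subset)
  have \<sigma>_nz: "\<sigma> \<zeta> \<noteq> 0" if "\<zeta> \<in> sphere 0 r" for \<zeta>
    using that r \<tau>_nz[of \<zeta>] by (auto simp: \<sigma>_def)
  obtain \<zeta>0 where "\<zeta>0 \<in> sphere 0 r" and \<zeta>0_min: "\<And>\<zeta>. \<zeta> \<in> sphere 0 r \<Longrightarrow> norm (\<sigma> \<zeta>0) \<le> norm (\<sigma> \<zeta>)"
    using continuous_attains_inf[OF compact_sphere _ continuous_on_norm[OF cont_\<sigma>]] r by force
  define m where "m = norm (\<sigma> \<zeta>0)"
  have "0 < m"
    using \<sigma>_nz[OF \<open>\<zeta>0 \<in> sphere 0 r\<close>] by (simp add: m_def)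
  moreover have "isCont \<sigma> 0"
    using hol_\<sigma> \<open>0 < R\<close> by (intro continuous_on_interior[OF holomorphic_on_imp_continuous_on]) auto
  ultimately obtain \<delta> where "\<delta> > 0" and \<delta>: "\<And>z. norm z < \<delta> \<Longrightarrow> norm (\<sigma> z) < m"
    unfolding continuous_at_eps_delta by (force simp: \<sigma>_def dist_norm)
  have "(\<lambda>n. lagrange_coeff b \<tau> n * \<sigma> z ^ n) sums b z" if z: "norm z < min \<delta> r" for z
  proof -
    have "(\<lambda>n. contour_integral (circlepath 0 r) (\<lambda>\<zeta>. b \<zeta> * deriv \<sigma> \<zeta> / \<sigma> \<zeta> ^ Suc n) * \<sigma> z ^ n)
        sums contour_integral (circlepath 0 r) (\<lambda>\<zeta>. b \<zeta> * deriv \<sigma> \<zeta> / (\<sigma> \<zeta> - \<sigma> z))"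
      using r cont_f cont_\<sigma> \<zeta>0_min \<delta> z
      by (intro sums_contour_integral_geometric[where m = m]) (auto simp: m_def)
    then have "(\<lambda>n. 2 * pi * \<i> * (lagrange_coeff b \<tau> n * \<sigma> z ^ n)) sums (2 * pi * \<i> * b z)"
      using contour_integral_inverse_kernel[OF hol_b hol_\<sigma> open_ball _ r(3), of z] inj z
        contour_integral_lagrange_coeff[OF hol_b hol_\<tau> \<tau>_nz r(1,2)]
      by (simp add: \<sigma>_def[abs_def] mult.assoc)
    then show ?thesis
      by (simp add: sums_mult_iff)
  qed
  then show ?thesis
    using \<open>\<delta> > 0\<close> r by (intro exI[of _ "min \<delta> r"]) (auto simp: \<sigma>_def)
qed

lemma holomorphic_local_inverse:
  assumes hol: "f holomorphic_on S" and "open S" "z \<in> S" "deriv f z \<noteq> 0"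
  obtains \<delta> \<epsilon> g where "0 < \<delta>" "0 < \<epsilon>" "ball z \<delta> \<subseteq> S" "g holomorphic_on ball (f z) \<epsilon>"
    "g ` ball (f z) \<epsilon> \<subseteq> ball z \<delta>" "\<And>w. w \<in> ball z \<delta> \<Longrightarrow> g (f w) = w"
proof -
  obtain \<delta> where \<delta>: "0 < \<delta>" "ball z \<delta> \<subseteq> S" "inj_on f (ball z \<delta>)"
    using has_complex_derivative_locally_injective[OF hol \<open>z \<in> S\<close> \<open>open S\<close> \<open>deriv f z \<noteq> 0\<close>] by blast
  have hol_\<delta>: "f holomorphic_on ball z \<delta>"
    using hol \<delta>(2) by (rule holomorphic_on_subset)
  obtain g where g: "g holomorphic_on f ` ball z \<delta>" "\<And>w. w \<in> ball z \<delta> \<Longrightarrow> g (f w) = w"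
    using holomorphic_has_inverse[OF hol_\<delta> open_ball \<delta>(3)] by metis
  have "open (f ` ball z \<delta>)" "f z \<in> f ` ball z \<delta>"
    using open_mapping_thm3[OF hol_\<delta> open_ball \<delta>(3)] \<delta>(1) by auto
  then obtain \<epsilon> where "0 < \<epsilon>" "ball (f z) \<epsilon> \<subseteq> f ` ball z \<delta>"
    using open_contains_ball_eq by blast
  with g \<delta> show ?thesis
    by (intro that[of \<delta> \<epsilon> g]) (auto elim!: holomorphic_on_subset)
qed

section \<open>Power series distributions\<close>

lemma psd_mean_eq:
  fixes a :: "nat \<Rightarrow> real"
  assumes "0 < y" "ereal y < conv_radius a"
  shows "psd_mean a y = y * (\<Sum>k. diffs a k * y ^ k) / (\<Sum>k. a k * y ^ k)"
proof -
  have "ps_fun a = (\<lambda>y. \<Sum>k. a k * y ^ k)"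
    by (simp add: ps_fun_def[abs_def])
  then have "deriv (ps_fun a) y = (\<Sum>k. diffs a k * y ^ k)"
    using assms by (simp add: DERIV_imp_deriv powser_has_real_derivative)
  then show ?thesis
    by (simp add: psd_mean_def ps_fun_def)
qed

lemma nonneg_powser_pos:
  fixes a :: "nat \<Rightarrow> real"
  assumes nonneg: "\<And>k. 0 \<le> a k" and "0 < a 0" and y: "0 \<le> y" "ereal y < conv_radius a"
  shows "0 < (\<Sum>k. a k * y ^ k)"
proof -
  have "a 0 * y ^ 0 \<le> (\<Sum>k. a k * y ^ k)"
    using nonneg y by (intro sum_le_suminf[of _ "{0}", simplified] summable_in_conv_radius) auto
  then show ?thesis
    using \<open>0 < a 0\<close> by simp
qed

lemma sums_index_times_powser:
  fixes a :: "nat \<Rightarrow> real"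
  assumes "summable (\<lambda>k. diffs a k * y ^ k)"
  shows "(\<lambda>k. real k * a k * y ^ k) sums (y * (\<Sum>k. diffs a k * y ^ k))"
proof -
  have "(\<lambda>k. y * (diffs a k * y ^ k)) sums (y * (\<Sum>k. diffs a k * y ^ k))"
    using assms by (intro sums_mult summable_sums)
  then have "(\<lambda>k. real (Suc k) * a (Suc k) * y ^ Suc k) sums (y * (\<Sum>k. diffs a k * y ^ k))"
    by (simp add: diffs_def mult_ac)
  then show ?thesis
    using sums_Suc_iff[of "\<lambda>k. real k * a k * y ^ k"] by simp
qed

lemma sums_falling_index_times_powser:
  fixes a :: "nat \<Rightarrow> real"
  assumes "summable (\<lambda>k. diffs (diffs a) k * y ^ k)"
  shows "(\<lambda>k. real k * (real k - 1) * a k * y ^ k) sums (y ^ 2 * (\<Sum>k. diffs (diffs a) k * y ^ k))"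
proof -
  have "(\<lambda>k. y ^ 2 * (diffs (diffs a) k * y ^ k)) sums (y ^ 2 * (\<Sum>k. diffs (diffs a) k * y ^ k))"
    using assms by (intro sums_mult summable_sums)
  then have "(\<lambda>k. real (Suc (Suc k)) * (real (Suc (Suc k)) - 1) * a (Suc (Suc k)) * y ^ Suc (Suc k))
      sums (y ^ 2 * (\<Sum>k. diffs (diffs a) k * y ^ k))"
    by (simp add: diffs_def power2_eq_square mult_ac)
  then show ?thesis
    using sums_Suc_iff[of "\<lambda>k. real k * (real k - 1) * a k * y ^ k"]
      sums_Suc_iff[of "\<lambda>k. real (Suc k) * (real (Suc k) - 1) * a (Suc k) * y ^ Suc k"] by simp
qed

text \<open>Divided by P^2 / y, the difference of the two sides is the variance of the distribution with
  parameter y, the sum of the (k - \<mu>)^2 a k y^k / P.\<close>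

lemma powser_variance_pos:
  fixes a :: "nat \<Rightarrow> real"
  assumes nonneg: "\<And>k. 0 \<le> a k" and "0 < a 0" and "1 \<le> j" "0 < a j"
    and y: "0 < y" "ereal y < conv_radius a"
  defines "P \<equiv> \<Sum>k. a k * y ^ k" and "P' \<equiv> \<Sum>k. diffs a k * y ^ k"
    and "P'' \<equiv> \<Sum>k. diffs (diffs a) k * y ^ k"
  shows "y * P' ^ 2 < (P' + y * P'') * P"
proof -
  have summable_diffs: "summable (\<lambda>k. (diffs ^^ n) a k * y ^ k)" for n
    using y conv_radius_funpow_diffs_ge[of a n] by (intro summable_in_conv_radius) auto
  have sums_P: "(\<lambda>k. a k * y ^ k) sums P"
    using summable_diffs[of 0] by (simp add: P_def summable_sums)
  have sums_kP: "(\<lambda>k. real k * a k * y ^ k) sums (y * P')"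
    using summable_diffs[of 1] unfolding P'_def by (intro sums_index_times_powser) simp
  have sums_kkP: "(\<lambda>k. real k * (real k - 1) * a k * y ^ k) sums (y ^ 2 * P'')"
    using summable_diffs[of 2] unfolding P''_def
    by (intro sums_falling_index_times_powser) (simp add: numeral_2_eq_2)
  have term_le_sum: "f n \<le> s" if "f sums s" "\<And>k. 0 \<le> f k" for f :: "nat \<Rightarrow> real" and s n
    using sum_le_suminf[of f "{n}"] that by (auto simp: sums_iff)
  have "P > 0"
    using nonneg_powser_pos[of a, OF nonneg \<open>0 < a 0\<close>] y by (simp add: P_def)
  have "real j * a j * y ^ j \<le> y * P'"
    using nonneg y by (intro term_le_sum[OF sums_kP]) simp
  moreover have "0 < real j * a j * y ^ j"
    using \<open>1 \<le> j\<close> \<open>0 < a j\<close> y by simp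
  ultimately have "y * P' > 0"
    by linarith
  define \<mu> where "\<mu> = y * P' / P"
  have "(\<lambda>k. real k * (real k - 1) * a k * y ^ k + real k * a k * y ^ k
      - 2 * \<mu> * (real k * a k * y ^ k) + \<mu> ^ 2 * (a k * y ^ k))
      sums (y ^ 2 * P'' + y * P' - 2 * \<mu> * (y * P') + \<mu> ^ 2 * P)"
    by (intro sums_add sums_diff sums_mult sums_P sums_kP sums_kkP)
  then have "(\<lambda>k. (real k - \<mu>) ^ 2 * (a k * y ^ k)) sums (y ^ 2 * P'' + y * P' - 2 * \<mu> * (y * P') + \<mu> ^ 2 * P)"
    by (simp add: power2_eq_square algebra_simps)
  moreover have "0 < (real 0 - \<mu>) ^ 2 * (a 0 * y ^ 0)"
    using \<open>P > 0\<close> \<open>y * P' > 0\<close> \<open>0 < a 0\<close> by (simp add: \<mu>_def power2_eq_square)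
  ultimately have "0 < y ^ 2 * P'' + y * P' - 2 * \<mu> * (y * P') + \<mu> ^ 2 * P"
    using term_le_sum[of "\<lambda>k. (real k - \<mu>) ^ 2 * (a k * y ^ k)" _ 0] nonneg y by fastforce
  also have "y ^ 2 * P'' + y * P' - 2 * \<mu> * (y * P') + \<mu> ^ 2 * P = y / P * ((P' + y * P'') * P - y * P' ^ 2)"
    using \<open>P > 0\<close> by (simp add: \<mu>_def field_simps power2_eq_square)
  finally show ?thesis
    using \<open>P > 0\<close> y by (simp add: zero_less_mult_iff zero_less_divide_iff)
qed

lemma open_psd_params: "open (psd_params a)"
proof -
  have "psd_params a = {0<..} \<inter> ereal -` {..<conv_radius a}"
    by (auto simp: psd_params_def)
  then show ?thesis
    by (simp add: open_Int continuous_on_ereal open_vimage)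
qed

lemma psd_mean_has_pos_derivative:
  fixes a :: "nat \<Rightarrow> real"
  assumes nonneg: "\<And>k. 0 \<le> a k" and "0 < a 0" and "1 \<le> j" "0 < a j" and y: "y \<in> psd_params a"
  shows "\<exists>d > 0. (psd_mean a has_real_derivative d) (at y)"
proof -
  define P where "P t = (\<Sum>k. a k * t ^ k)" for t
  define P' where "P' t = (\<Sum>k. diffs a k * t ^ k)" for t
  define P'' where "P'' t = (\<Sum>k. diffs (diffs a) k * t ^ k)" for t
  have y: "0 < y" "ereal y < conv_radius a"
    using y by (auto simp: psd_params_def)
  have in_radius: "ereal \<bar>t\<bar> < conv_radius ((diffs ^^ n) a)" if "t \<in> psd_params a" for t n
    using that conv_radius_funpow_diffs_ge[of a n] by (auto simp: psd_params_def)
  have "P y > 0"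
    using nonneg_powser_pos[of a, OF nonneg \<open>0 < a 0\<close>] y by (simp add: P_def)
  have "(P has_real_derivative P' y) (at y)"
    unfolding P_def[abs_def] P'_def using in_radius[OF \<open>y \<in> psd_params a\<close>, of 0]
    by (intro powser_has_real_derivative) simp
  moreover have "(P' has_real_derivative P'' y) (at y)"
    unfolding P'_def[abs_def] P''_def using in_radius[OF \<open>y \<in> psd_params a\<close>, of 1]
    by (intro powser_has_real_derivative) simp
  ultimately have "((\<lambda>t. t * P' t / P t) has_real_derivative
      ((1 * P' y + P'' y * y) * P y - P' y * (y * P' y)) / P y ^ Suc (Suc 0)) (at y)"
    using \<open>P y > 0\<close> by (intro DERIV_quotient DERIV_mult DERIV_ident) auto
  also have "((1 * P' y + P'' y * y) * P y - P' y * (y * P' y)) / P y ^ Suc (Suc 0)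
      = ((P' y + y * P'' y) * P y - y * P' y ^ 2) / P y ^ 2"
    by (simp add: power2_eq_square algebra_simps)
  finally have "((\<lambda>t. t * P' t / P t) has_real_derivative
      ((P' y + y * P'' y) * P y - y * P' y ^ 2) / P y ^ 2) (at y)" .
  moreover have "t * P' t / P t = psd_mean a t" if "t \<in> psd_params a" for t
    using that by (simp add: psd_mean_eq psd_params_def P_def P'_def)
  ultimately have "(psd_mean a has_real_derivative
      ((P' y + y * P'' y) * P y - y * P' y ^ 2) / P y ^ 2) (at y)"
    using open_psd_params \<open>y \<in> psd_params a\<close> has_field_derivative_transform_within_open
    by blast
  moreover have "((P' y + y * P'' y) * P y - y * P' y ^ 2) / P y ^ 2 > 0"
    using powser_variance_pos[OF assms(1-4) y] \<open>P y > 0\<close> by (simp add: P_def P'_def P''_def)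
  ultimately show ?thesis
    by blast
qed

lemma strict_mono_on_psd_mean:
  fixes a :: "nat \<Rightarrow> real"
  assumes "\<And>k. 0 \<le> a k" and "0 < a 0" and "1 \<le> j" "0 < a j"
  shows "strict_mono_on (psd_params a) (psd_mean a)"
proof (rule strict_mono_onI)
  fix y1 y2 assume y: "y1 \<in> psd_params a" "y2 \<in> psd_params a" "y1 < y2"
  have between: "y \<in> psd_params a" if "y1 \<le> y" "y \<le> y2" for y
  proof -
    have "ereal y \<le> ereal y2"
      using that by simp
    also have "\<dots> < conv_radius a"
      using y(2) by (simp add: psd_params_def)
    finally show ?thesis
      using y(1) that by (simp add: psd_params_def)
  qed
  show "psd_mean a y1 < psd_mean a y2"
    using psd_mean_has_pos_derivative[OF assms between]
    by (intro DERIV_pos_imp_increasing[OF y(3)]) blast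
qed

lemma psd_cov_eq:
  fixes a :: "nat \<Rightarrow> real" and f :: "real \<Rightarrow> real"
  assumes inj: "inj_on (psd_mean a) (psd_params a)" and "open I" "x \<in> I"
    and inverse: "\<And>t. t \<in> I \<Longrightarrow> f t \<in> psd_params a \<and> psd_mean a (f t) = t"
    and "(f has_real_derivative f') (at x)"
  shows "psd_cov a x = f x / f'"
proof -
  have inv: "inv_into (psd_params a) (psd_mean a) t = f t" if "t \<in> I" for t
    using inv_into_f_f[OF inj, of "f t"] inverse[OF that] by simp
  then have "(inv_into (psd_params a) (psd_mean a) has_real_derivative f') (at x)"
    using assms(2-5) has_field_derivative_transform_within_open[of f f' x I] by simp
  then show ?thesis
    using inv[OF \<open>x \<in> I\<close>] by (simp add: psd_cov_def DERIV_imp_deriv)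
qed

section \<open>The equation u' = u / v on the real axis\<close>

lemma linear_ode_imaginary_share_constant:
  fixes u :: "real \<Rightarrow> complex" and v :: "real \<Rightarrow> real"
  assumes "convex I"
    and deriv: "\<And>t. t \<in> I \<Longrightarrow> (u has_vector_derivative u t / of_real (v t)) (at t)"
    and u_nz: "\<And>t. t \<in> I \<Longrightarrow> u t \<noteq> 0"
  obtains c where "\<And>t. t \<in> I \<Longrightarrow> Im (u t) ^ 2 / (Re (u t) ^ 2 + Im (u t) ^ 2) = c"
proof -
  define X where "X t = Re (u t)" for t
  define Y where "Y t = Im (u t)" for t
  have "((\<lambda>t. Y t ^ 2 / (X t ^ 2 + Y t ^ 2)) has_real_derivative 0) (at t within I)" if "t \<in> I" for t
  proof -
    have dX: "(X has_real_derivative X t / v t) (at t)"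
      unfolding X_def[abs_def] using has_field_derivative_Re[OF deriv[OF that]] by simp
    have dY: "(Y has_real_derivative Y t / v t) (at t)"
      unfolding Y_def[abs_def] using has_field_derivative_Im[OF deriv[OF that]] by simp
    have "X t ^ 2 + Y t ^ 2 \<noteq> 0"
      using u_nz[OF that] by (simp add: X_def Y_def complex_eq_iff add_nonneg_eq_0_iff)
    then have "((\<lambda>t. Y t ^ 2 / (X t ^ 2 + Y t ^ 2)) has_real_derivative
        (of_nat 2 * (Y t / v t * Y t ^ (2 - Suc 0)) * (X t ^ 2 + Y t ^ 2)
          - (of_nat 2 * (X t / v t * X t ^ (2 - Suc 0)) + of_nat 2 * (Y t / v t * Y t ^ (2 - Suc 0)))
            * Y t ^ 2) / (X t ^ 2 + Y t ^ 2) ^ Suc (Suc 0)) (at t)"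
      by (intro DERIV_quotient DERIV_add DERIV_power dX dY)
    moreover have "of_nat 2 * (Y t / v t * Y t ^ (2 - Suc 0)) * (X t ^ 2 + Y t ^ 2)
          - (of_nat 2 * (X t / v t * X t ^ (2 - Suc 0)) + of_nat 2 * (Y t / v t * Y t ^ (2 - Suc 0)))
            * Y t ^ 2 = 0"
      by (simp add: divide_inverse algebra_simps power2_eq_square)
    ultimately show ?thesis
      by (simp add: has_field_derivative_at_within)
  qed
  then obtain c where "\<forall>t \<in> I. Y t ^ 2 / (X t ^ 2 + Y t ^ 2) = c"
    using has_field_derivative_zero_constant[OF \<open>convex I\<close>] by blast
  then show ?thesis
    by (intro that[of c]) (simp add: X_def Y_def)
qed

lemma linear_ode_solution_real:
  fixes u :: "real \<Rightarrow> complex" and v :: "real \<Rightarrow> real"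
  assumes deriv: "\<And>t. t \<in> {0<..<R} \<Longrightarrow> (u has_vector_derivative u t / of_real (v t)) (at t)"
    and u_nz: "\<And>t. t \<in> {0<..<R} \<Longrightarrow> u t \<noteq> 0"
    and lim: "((\<lambda>t. u t / of_real t) \<longlongrightarrow> of_real L) (at_right 0)" and "L \<noteq> 0"
    and t: "t \<in> {0<..<R}"
  shows "u t \<in> \<real>"
proof -
  obtain c where c: "\<And>t. t \<in> {0<..<R} \<Longrightarrow> Im (u t) ^ 2 / (Re (u t) ^ 2 + Im (u t) ^ 2) = c"
    using linear_ode_imaginary_share_constant[OF convex_real_interval(8) deriv u_nz] by blast
  define w where "w s = u s / of_real s" for s
  have "((\<lambda>s. Im (w s) ^ 2 / (Re (w s) ^ 2 + Im (w s) ^ 2))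
      \<longlongrightarrow> Im (of_real L) ^ 2 / (Re (of_real L) ^ 2 + Im (complex_of_real L) ^ 2)) (at_right 0)"
    using \<open>L \<noteq> 0\<close> by (intro tendsto_intros lim[folded w_def]) auto
  moreover have "Im (w s) ^ 2 / (Re (w s) ^ 2 + Im (w s) ^ 2) = c" if "s \<in> {0<..<R}" for s
  proof -
    have "Re (u s) ^ 2 + Im (u s) ^ 2 \<noteq> 0"
      using u_nz[OF that] by (simp add: complex_eq_iff add_nonneg_eq_0_iff)
    then show ?thesis
      using that c[OF that] by (simp add: w_def power_divide field_simps)
  qed
  then have "eventually (\<lambda>s. Im (w s) ^ 2 / (Re (w s) ^ 2 + Im (w s) ^ 2) = c) (at_right 0)"
    using t unfolding eventually_at_right_field by (intro exI[of _ R]) auto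
  ultimately have "c = 0"
    by (simp add: tendsto_const_iff tendsto_cong)
  then show ?thesis
    using c[OF t] u_nz[OF t] by (auto simp: complex_is_Real_iff)
qed

lemma continuous_on_nonzero_pos:
  fixes f :: "real \<Rightarrow> real"
  assumes "continuous_on {a<..<b} f" and nz: "\<And>t. t \<in> {a<..<b} \<Longrightarrow> f t \<noteq> 0"
    and "eventually (\<lambda>t. 0 < f t) (at_right a)" and t: "t \<in> {a<..<b}"
  shows "0 < f t"
proof (rule ccontr)
  assume "\<not> 0 < f t"
  moreover have "eventually (\<lambda>s. s \<in> {a<..<b}) (at_right a)"
    using t by (auto simp: eventually_at_right_field intro!: exI[of _ b])
  with assms(3) have "eventually (\<lambda>s. 0 < f s \<and> s \<in> {a<..<b}) (at_right a)"
    by eventually_elim auto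
  then obtain s where "0 < f s" "s \<in> {a<..<b}"
    using eventually_happens'[OF trivial_limit_at_right_real] by blast
  moreover have "connected (f ` {a<..<b})"
    using assms(1) by (intro connected_continuous_image) auto
  ultimately have "0 \<in> f ` {a<..<b}"
    using t connectedD_interval[of "f ` {a<..<b}" "f t" "f s" 0] by auto
  then show False
    using nz by auto
qed

locale psd_covariance_setting =
  fixes V s b :: "complex \<Rightarrow> complex" and R \<tau>0 :: real and D :: "complex set"
  assumes R_pos: "0 < R"
    and V_real_pos: "\<And>x. x \<in> {0<..<R} \<Longrightarrow> V (of_real x) \<in> \<real> \<and> 0 < Re (V (of_real x))"
    and open_D: "open D" and segment_subset_D: "of_real ` {0..<R} \<subseteq> D"
    and V_nz: "\<And>z. z \<in> D - {0} \<Longrightarrow> V z \<noteq> 0"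
    and s_nz: "\<And>z. z \<in> D - {0} \<Longrightarrow> s z \<noteq> 0"
    and s_deriv: "\<And>z. z \<in> D - {0} \<Longrightarrow> (s has_field_derivative s z / V z) (at z)"
    and b_holomorphic: "b holomorphic_on D"
    and b_nz: "\<And>z. z \<in> D \<Longrightarrow> b z \<noteq> 0"
    and b_deriv: "\<And>z. z \<in> D - {0} \<Longrightarrow> (b has_field_derivative b z * z / V z) (at z)"
    and \<tau>0_pos: "0 < \<tau>0" and tendsto_z_over_s: "((\<lambda>z. z / s z) \<longlongrightarrow> of_real \<tau>0) (at 0)"
    and b_0: "b 0 \<in> \<real>" "0 \<le> Re (b 0)"
    \<comment> \<open>the hypothesis on the numbers c_k, k \<ge> 1, which are the coefficients with index k + 1\<close>
    and higher_lagrange_coeffs: "\<And>n. 2 \<le> n \<Longrightarrow>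
      lagrange_coeff b (\<lambda>z. if z = 0 then of_real \<tau>0 else z / s z) n \<in> \<real> \<and>
      0 \<le> Re (lagrange_coeff b (\<lambda>z. if z = 0 then of_real \<tau>0 else z / s z) n)"
begin

definition tau :: "complex \<Rightarrow> complex" where
  "tau z = (if z = 0 then of_real \<tau>0 else z / s z)"

lemma zero_in_D: "0 \<in> D"
  using segment_subset_D R_pos by force

lemma open_D_minus_0: "open (D - {0})"
  using open_D by auto

lemma s_holomorphic: "s holomorphic_on D - {0}"
  using s_deriv open_D_minus_0 by (auto simp: holomorphic_on_open)

lemma tau_holomorphic: "tau holomorphic_on D"
proof -
  have "(\<lambda>z. z / s z) holomorphic_on D - {0}"
    using s_holomorphic s_nz by (intro holomorphic_intros) auto
  then show ?thesis
    unfolding tau_def[abs_def] using open_D tendsto_z_over_s by (rule removable_singularity)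
qed

lemma tau_0 [simp]: "tau 0 = of_real \<tau>0"
  by (simp add: tau_def)

lemma isCont_tau: "isCont tau z" if "z \<in> D"
  using holomorphic_on_imp_continuous_on[OF tau_holomorphic] open_D that
  by (simp add: continuous_on_eq_continuous_at)

lemma s_eq: "s z = z / tau z" if "z \<in> D - {0}"
  using that s_nz[OF that] by (simp add: tau_def)

lemma inversion_disc:
  obtains r where "0 < r" "ball 0 r \<subseteq> D" "\<And>z. z \<in> ball 0 r \<Longrightarrow> tau z \<noteq> 0"
    "inj_on (\<lambda>z. z / tau z) (ball 0 r)"
proof -
  obtain r0 where "0 < r0" and r0: "\<And>z. dist z 0 < r0 \<Longrightarrow> dist (tau z) (tau 0) < \<tau>0"
    using isCont_tau[OF zero_in_D] \<tau>0_pos unfolding continuous_at_eps_delta by blast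
  obtain r1 where "0 < r1" "ball 0 r1 \<subseteq> D"
    using open_D zero_in_D open_contains_ball_eq by blast
  define U where "U = ball (0::complex) (min r0 r1)"
  have tau_nz: "tau z \<noteq> 0" if "z \<in> U" for z
    using r0[of z] that by (auto simp: U_def dist_norm)
  have "U \<subseteq> D"
    using \<open>ball 0 r1 \<subseteq> D\<close> by (auto simp: U_def)
  then have hol: "(\<lambda>z. z / tau z) holomorphic_on U"
    using tau_nz by (intro holomorphic_intros holomorphic_on_subset[OF tau_holomorphic]) auto
  have "((\<lambda>z. z / tau z) has_field_derivative 1 / of_real \<tau>0) (at 0)"
    using holomorphic_derivI[OF tau_holomorphic open_D zero_in_D] \<tau>0_pos
    by (auto intro!: derivative_eq_intros)
  then have "deriv (\<lambda>z. z / tau z) 0 \<noteq> 0"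
    using \<tau>0_pos by (simp add: DERIV_imp_deriv)
  then obtain r where "0 < r" "ball 0 r \<subseteq> U" "inj_on (\<lambda>z. z / tau z) (ball 0 r)"
    using has_complex_derivative_locally_injective[OF hol _ _] \<open>0 < r0\<close> \<open>0 < r1\<close>
    by (metis U_def centre_in_ball min_less_iff_conj open_ball)
  then show ?thesis
    using \<open>U \<subseteq> D\<close> tau_nz by (intro that) auto
qed

lemma tau_nz: "tau z \<noteq> 0" if "z \<in> D - {0}"
  using that s_nz[OF that] by (simp add: tau_def)

text \<open>This is b'/b = z/V = z s'/s rewritten with s = z/tau.\<close>

lemma deriv_b_eq: "deriv b z = b z * (tau z - z * deriv tau z) / tau z" if zD: "z \<in> D - {0}"
proof -
  have "((\<lambda>w. w / tau w) has_field_derivative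
      (1 * tau z - deriv tau z * z) / tau z ^ Suc (Suc 0)) (at z)"
    using holomorphic_derivI[OF tau_holomorphic open_D] zD tau_nz[OF zD]
    by (intro DERIV_quotient DERIV_ident) auto
  then have "((\<lambda>w. w / tau w) has_field_derivative (tau z - z * deriv tau z) / tau z ^ 2) (at z)"
    by (simp add: mult.commute power2_eq_square)
  then have "(s has_field_derivative (tau z - z * deriv tau z) / tau z ^ 2) (at z)"
    by (rule has_field_derivative_transform_within_open[OF _ open_D_minus_0 zD]) (simp add: s_eq)
  then have "s z / V z = (tau z - z * deriv tau z) / tau z ^ 2"
    using s_deriv[OF zD] by (rule DERIV_unique[rotated])
  moreover have "deriv b z = b z * (z / s z) * (s z / V z)"
    using DERIV_imp_deriv[OF b_deriv[OF zD]] s_nz[OF zD] by simp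
  ultimately show ?thesis
    using tau_nz[OF zD] s_eq[OF zD] zD by (simp add: power2_eq_square)
qed

lemma deriv_b_0: "deriv b 0 = b 0"
proof -
  define G where "G z = b z * (tau z - z * deriv tau z) / tau z" for z
  have "eventually (\<lambda>z. G z = deriv b z) (at 0)"
    using eventually_at_in_open[OF open_D zero_in_D] by eventually_elim (simp add: G_def deriv_b_eq)
  moreover have "isCont G 0"
  proof -
    have "isCont b 0" "isCont (deriv tau) 0"
      using holomorphic_on_imp_continuous_on[OF b_holomorphic]
        holomorphic_on_imp_continuous_on[OF holomorphic_deriv[OF tau_holomorphic open_D]]
        zero_in_D open_D
      by (simp_all add: continuous_on_eq_continuous_at)
    then show ?thesis
      unfolding G_def using isCont_tau[OF zero_in_D] \<tau>0_pos
      by (intro isCont_divide isCont_mult isCont_diff continuous_ident) auto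
  qed
  ultimately have "deriv b \<midarrow>0\<rightarrow> G 0"
    using Lim_transform_eventually[of G "G 0" "at 0" "deriv b"] by (simp add: isCont_def)
  moreover have "isCont (deriv b) 0"
    using holomorphic_on_imp_continuous_on[OF holomorphic_deriv[OF b_holomorphic open_D]]
      zero_in_D open_D
    by (simp add: continuous_on_eq_continuous_at)
  ultimately have "G 0 = deriv b 0"
    unfolding isCont_def by (rule LIM_unique)
  then show ?thesis
    using \<tau>0_pos by (simp add: G_def)
qed

lemma lagrange_coeff_real_nonneg:
  "lagrange_coeff b tau n \<in> \<real> \<and> 0 \<le> Re (lagrange_coeff b tau n)"
proof -
  consider "n = 0" | "n = 1" | "2 \<le> n"
    by linarith
  then show ?thesis
  proof cases
    case 1
    then show ?thesis
      using b_0 by (simp add: lagrange_coeff_def)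
  next
    case 2
    then have "lagrange_coeff b tau n = b 0 * of_real \<tau>0"
      by (simp add: lagrange_coeff_def deriv_b_0)
    then show ?thesis
      using b_0 \<tau>0_pos by (auto elim!: Reals_cases)
  next
    case 3
    then show ?thesis
      using higher_lagrange_coeffs[of n] by (simp add: tau_def[abs_def])
  qed
qed

definition a :: "nat \<Rightarrow> real" where
  "a n = Re (lagrange_coeff b tau n)"

lemma a_nonneg: "0 \<le> a n"
  using lagrange_coeff_real_nonneg by (simp add: a_def)

lemma lagrange_coeff_eq_a: "lagrange_coeff b tau n = of_real (a n)"
  using lagrange_coeff_real_nonneg[of n] by (simp add: a_def complex_is_Real_iff complex_eq_iff)

lemma b_expansion:
  obtains \<epsilon> where "0 < \<epsilon>" "ball 0 \<epsilon> \<subseteq> D"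
    "\<And>z. z \<noteq> 0 \<Longrightarrow> norm z < \<epsilon> \<Longrightarrow> (\<lambda>n. of_real (a n) * s z ^ n) sums b z"
proof -
  obtain r where r: "0 < r" "ball 0 r \<subseteq> D" "\<And>z. z \<in> ball 0 r \<Longrightarrow> tau z \<noteq> 0"
    "inj_on (\<lambda>z. z / tau z) (ball 0 r)"
    using inversion_disc by metis
  obtain \<epsilon> where "0 < \<epsilon>" and \<epsilon>: "\<And>z. norm z < \<epsilon> \<Longrightarrow>
      (\<lambda>n. lagrange_coeff b tau n * (z / tau z) ^ n) sums b z"
    using lagrange_burmann[OF r(1) holomorphic_on_subset[OF b_holomorphic r(2)]
        holomorphic_on_subset[OF tau_holomorphic r(2)] r(3,4)] by blast
  show ?thesis
  proof (rule that[of "min \<epsilon> r"])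
    show "ball 0 (min \<epsilon> r) \<subseteq> D"
      using r(2) by auto
    show "(\<lambda>n. of_real (a n) * s z ^ n) sums b z" if "z \<noteq> 0" "norm z < min \<epsilon> r" for z
      using \<epsilon>[of z] s_eq[of z] that r(2) by (auto simp: lagrange_coeff_eq_a)
  qed (use \<open>0 < \<epsilon>\<close> r(1) in auto)
qed

lemma conv_radius_a_pos: "0 < conv_radius a"
proof -
  obtain \<epsilon> where "0 < \<epsilon>" "ball 0 \<epsilon> \<subseteq> D"
    and \<epsilon>: "\<And>z. z \<noteq> 0 \<Longrightarrow> norm z < \<epsilon> \<Longrightarrow> (\<lambda>n. of_real (a n) * s z ^ n) sums b z"
    using b_expansion by metis
  define z where "z = complex_of_real (\<epsilon> / 2)"
  have "z \<in> D - {0}" "norm z < \<epsilon>"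
    using \<open>0 < \<epsilon>\<close> \<open>ball 0 \<epsilon> \<subseteq> D\<close> by (auto simp: z_def)
  have "0 < ereal (norm (s z))"
    using s_nz[OF \<open>z \<in> D - {0}\<close>] by simp
  also have "\<dots> \<le> conv_radius (\<lambda>n. complex_of_real (a n))"
    using \<epsilon>[of z] \<open>z \<in> D - {0}\<close> \<open>norm z < \<epsilon>\<close> by (intro conv_radius_geI) (auto simp: sums_summable)
  also have "\<dots> = conv_radius a"
    using conv_radius_norm[of "\<lambda>n. complex_of_real (a n)"] a_nonneg by simp
  finally show ?thesis .
qed

text \<open>The function omega = b o s^-1 of the theorem, see \<open>b_expansion\<close>.\<close>

definition omega :: "complex \<Rightarrow> complex" where
  "omega w = (\<Sum>k. of_real (a k) * w ^ k)"

lemma omega_holomorphic: "omega holomorphic_on eball 0 (conv_radius a)"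
  using holomorphic_on_powser[of "\<lambda>k. complex_of_real (a k)"] conv_radius_norm[of "\<lambda>k. complex_of_real (a k)"]
    a_nonneg by (simp add: omega_def[abs_def])

text \<open>S x is the parameter of the distribution with mean x.\<close>

definition S :: "real \<Rightarrow> real" where
  "S t = Re (s (of_real t))"

definition v :: "real \<Rightarrow> real" where
  "v t = Re (V (of_real t))"

lemma of_real_in_D: "of_real t \<in> D - {0}" if "t \<in> {0<..<R}"
  using segment_subset_D that by auto

lemma V_of_real: "V (of_real t) = of_real (v t)" and v_pos: "0 < v t" if "t \<in> {0<..<R}"
  using V_real_pos[OF that] by (auto simp: v_def complex_is_Real_iff complex_eq_iff)

lemma tendsto_s_over_t: "((\<lambda>t. s (of_real t) / of_real t) \<longlongrightarrow> of_real (1 / \<tau>0)) (at_right 0)"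
proof -
  have "((\<lambda>t. tau (of_real t)) \<longlongrightarrow> tau (of_real 0)) (at 0)"
    using isCont_tau[OF zero_in_D]
    by (intro isCont_tendsto_compose[where g = tau] tendsto_of_real tendsto_ident_at) auto
  then have "((\<lambda>t. 1 / tau (of_real t)) \<longlongrightarrow> 1 / tau (of_real 0)) (at 0)"
    using \<tau>0_pos by (intro tendsto_divide tendsto_const) auto
  then have "((\<lambda>t. 1 / tau (of_real t)) \<longlongrightarrow> of_real (1 / \<tau>0)) (at_right 0)"
    by (simp add: Lim_at_imp_Lim_at_within)
  moreover have "eventually (\<lambda>t. 1 / tau (of_real t) = s (of_real t) / of_real t) (at_right 0)"
    using eventually_at_right_less[of 0] by eventually_elim (simp add: tau_def)
  ultimately show ?thesis
    by (rule Lim_transform_eventually)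
qed

lemma s_of_real: "s (of_real t) = of_real (S t)" if "t \<in> {0<..<R}"
proof -
  have "s (of_real t) \<in> \<real>"
  proof (rule linear_ode_solution_real[where u = "\<lambda>t. s (of_real t)" and v = v and L = "1 / \<tau>0"])
    show "((\<lambda>t. s (of_real t)) has_vector_derivative s (of_real t) / of_real (v t)) (at t)"
      if "t \<in> {0<..<R}" for t
      using has_vector_derivative_real_field[OF s_deriv[OF of_real_in_D[OF that]]] V_of_real[OF that]
      by simp
  qed (use s_nz of_real_in_D tendsto_s_over_t \<tau>0_pos that in auto)
  then show ?thesis
    by (simp add: S_def complex_is_Real_iff complex_eq_iff)
qed

lemma S_deriv: "(S has_real_derivative S t / v t) (at t)" if "t \<in> {0<..<R}"
proof -
  have "((\<lambda>t. s (of_real t)) has_vector_derivative s (of_real t) / V (of_real t)) (at t)"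
    using s_deriv[OF of_real_in_D[OF that]] by (rule has_vector_derivative_real_field)
  then show ?thesis
    using has_field_derivative_Re V_of_real[OF that] s_of_real[OF that] unfolding S_def[abs_def]
    by fastforce
qed

lemma continuous_on_S: "continuous_on {0<..<R} S"
  using S_deriv DERIV_isCont by (intro continuous_at_imp_continuous_on) blast

lemma S_pos: "0 < S t" if "t \<in> {0<..<R}"
proof (rule continuous_on_nonzero_pos[OF continuous_on_S _ _ that])
  show "S t \<noteq> 0" if "t \<in> {0<..<R}" for t
    using s_nz[OF of_real_in_D[OF that]] s_of_real[OF that] by auto
  have "((\<lambda>t. S t / t) \<longlongrightarrow> 1 / \<tau>0) (at_right 0)"
    using tendsto_Re[OF tendsto_s_over_t] by (simp add: S_def)
  then have "eventually (\<lambda>t. 0 < S t / t) (at_right 0)"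
    using \<tau>0_pos by (elim order_tendstoD(1)) simp
  then show "eventually (\<lambda>t. 0 < S t) (at_right 0)"
    using eventually_at_right_less[of 0] by eventually_elim (simp add: zero_less_divide_iff)
qed

lemma strict_mono_on_S: "strict_mono_on {0<..<R} S"
proof (rule strict_mono_onI)
  fix t1 t2 assume t: "t1 \<in> {0<..<R}" "t2 \<in> {0<..<R}" "t1 < t2"
  show "S t1 < S t2"
  proof (rule DERIV_pos_imp_increasing[OF t(3)])
    fix x assume "t1 \<le> x" "x \<le> t2"
    then have x: "x \<in> {0<..<R}"
      using t by auto
    show "\<exists>d. (S has_real_derivative d) (at x) \<and> 0 < d"
      using S_deriv[OF x] S_pos[OF x] v_pos[OF x] by (intro exI[of _ "S x / v x"]) auto
  qed
qed

lemma tendsto_S_0: "(S \<longlongrightarrow> 0) (at_right 0)"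
proof -
  have "((\<lambda>t. Re (s (of_real t) / of_real t) * t) \<longlongrightarrow> Re (of_real (1 / \<tau>0)) * 0) (at_right 0)"
    by (intro tendsto_intros tendsto_s_over_t)
  moreover have "eventually (\<lambda>t. Re (s (of_real t) / of_real t) * t = S t) (at_right 0)"
    using eventually_at_right_less[of 0] by eventually_elim (simp add: S_def)
  ultimately show ?thesis
    by (simp add: Lim_transform_eventually)
qed

lemma b_eq_omega_s_near_segment:
  assumes "0 < T" "T \<le> R" and below: "\<And>t. t \<in> {0<..<T} \<Longrightarrow> ereal (S t) < conv_radius a"
  obtains C where "open C" "of_real ` {0<..<T} \<subseteq> C" "C \<subseteq> D - {0}" "\<And>z. z \<in> C \<Longrightarrow> omega (s z) = b z"
proof -
  define \<Omega> where "\<Omega> = (D - {0}) \<inter> s -` eball 0 (conv_radius a)"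
  have "open \<Omega>"
    unfolding \<Omega>_def using open_D_minus_0 holomorphic_on_imp_continuous_on[OF s_holomorphic]
    by (intro continuous_open_preimage) auto
  have segment_\<Omega>: "of_real ` {0<..<T} \<subseteq> \<Omega>"
    using below s_of_real S_pos of_real_in_D \<open>T \<le> R\<close> by (force simp: \<Omega>_def)
  obtain \<epsilon> where "0 < \<epsilon>" "ball 0 \<epsilon> \<subseteq> D"
    and expansion: "\<And>z. z \<noteq> 0 \<Longrightarrow> norm z < \<epsilon> \<Longrightarrow> (\<lambda>n. of_real (a n) * s z ^ n) sums b z"
    using b_expansion by metis
  define \<xi> where "\<xi> = complex_of_real (min \<epsilon> T / 2)"
  have "\<xi> \<in> of_real ` {0<..<T}"
    using \<open>0 < \<epsilon>\<close> \<open>0 < T\<close> unfolding \<xi>_def by (intro imageI) auto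
  moreover have "\<xi> \<in> ball 0 \<epsilon> - {0}"
    using \<open>0 < \<epsilon>\<close> \<open>0 < T\<close> by (auto simp: \<xi>_def min_def)
  ultimately have \<xi>: "\<xi> \<in> of_real ` {0<..<T}" "\<xi> \<in> ball 0 \<epsilon> - {0}" .
  define C where "C = connected_component_set \<Omega> \<xi>"
  have "open C" "connected C" "C \<subseteq> \<Omega>"
    using \<open>open \<Omega>\<close> by (auto simp: C_def open_connected_component connected_component_subset)
  have segment_C: "of_real ` {0<..<T} \<subseteq> C"
    unfolding C_def using \<xi>(1) segment_\<Omega>
    by (intro connected_component_maximal connected_continuous_image continuous_intros) auto
  have "omega (s z) - b z = 0" if "z \<in> C" for z
  proof (rule analytic_continuation[where f = "\<lambda>z. omega (s z) - b z" and S = C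
        and U = "C \<inter> (ball 0 \<epsilon> - {0})" and \<xi> = \<xi>])
    have "s holomorphic_on C"
      using \<open>C \<subseteq> \<Omega>\<close> by (auto simp: \<Omega>_def intro: holomorphic_on_subset[OF s_holomorphic])
    then show "(\<lambda>z. omega (s z) - b z) holomorphic_on C"
      using \<open>C \<subseteq> \<Omega>\<close> holomorphic_on_subset[OF b_holomorphic]
        holomorphic_on_compose_gen[OF _ omega_holomorphic, of s C]
      by (auto simp: \<Omega>_def o_def intro!: holomorphic_intros)
    show "\<xi> islimpt C \<inter> (ball 0 \<epsilon> - {0})"
      using \<xi> segment_C \<open>open C\<close> by (intro open_imp_islimpt) auto
    show "omega (s z) - b z = 0" if "z \<in> C \<inter> (ball 0 \<epsilon> - {0})" for z
      using expansion[of z] that by (simp add: omega_def sums_iff)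
  qed (use \<xi> segment_C \<open>open C\<close> \<open>connected C\<close> that in auto)
  then show ?thesis
    using that \<open>open C\<close> segment_C \<open>C \<subseteq> \<Omega>\<close> by (auto simp: \<Omega>_def)
qed

lemma S_hits_value:
  assumes "t1 \<in> {0<..<R}" "t2 \<in> {0<..<R}" "t1 \<le> t2" "S t1 \<le> y" "y \<le> S t2"
  obtains t where "t1 \<le> t" "t \<le> t2" "S t = y"
proof -
  have "continuous_on {t1..t2} S"
    using assms(1,2) by (intro continuous_on_subset[OF continuous_on_S]) auto
  then show ?thesis
    using IVT'[OF assms(4,5,3)] that by auto
qed

lemma omega_extends_at_boundary:
  assumes T: "T \<in> {0<..<R}" and below: "\<And>t. t \<in> {0<..<T} \<Longrightarrow> ereal (S t) < conv_radius a"
  obtains \<epsilon> F w0 where "0 < \<epsilon>" "F holomorphic_on ball (of_real (S T)) \<epsilon>" "w0 < S T"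
    "\<And>w. w0 < w \<Longrightarrow> w < S T \<Longrightarrow> F (of_real w) = omega (of_real w)"
proof -
  have "0 < T" "T \<le> R"
    using T by auto
  then obtain C where "open C" and C: "of_real ` {0<..<T} \<subseteq> C" and "C \<subseteq> D - {0}"
    and C_eq: "\<And>z. z \<in> C \<Longrightarrow> omega (s z) = b z"
    using b_eq_omega_s_near_segment[OF _ _ below] by blast
  have TD: "of_real T \<in> D - {0}"
    using of_real_in_D[OF T] .
  have "deriv s (of_real T) \<noteq> 0"
    using DERIV_imp_deriv[OF s_deriv[OF TD]] s_nz[OF TD] V_nz[OF TD] by simp
  then obtain \<delta> \<epsilon> g where "0 < \<delta>" "0 < \<epsilon>" and \<delta>: "ball (of_real T) \<delta> \<subseteq> D - {0}"
    and g: "g holomorphic_on ball (s (of_real T)) \<epsilon>" "g ` ball (s (of_real T)) \<epsilon> \<subseteq> ball (of_real T) \<delta>"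
      "\<And>w. w \<in> ball (of_real T) \<delta> \<Longrightarrow> g (s w) = w"
    using holomorphic_local_inverse[OF s_holomorphic open_D_minus_0 TD] by metis
  have "(b \<circ> g) holomorphic_on ball (of_real (S T)) \<epsilon>"
    using g(1,2) \<delta> s_of_real[OF T] by (intro holomorphic_on_compose_gen[OF _ b_holomorphic]) auto
  moreover define tl where "tl = max (T / 2) (T - \<delta> / 2)"
  have tl: "tl \<in> {0<..<R}" "tl < T" "T - tl < \<delta>"
    using T \<open>0 < \<delta>\<close> by (auto simp: tl_def)
  have "S tl < S T"
    using strict_mono_onD[OF strict_mono_on_S tl(1) T tl(2)] .
  moreover have "(b \<circ> g) (of_real w) = omega (of_real w)" if w: "S tl < w" "w < S T" for w
  proof -
    obtain t where t: "tl \<le> t" "t \<le> T" "S t = w"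
      by (rule S_hits_value[OF tl(1) T, where y = w]) (use tl w in auto)
    then have "t \<in> {0<..<T}"
      using tl w by (cases "t = T") auto
    moreover have "of_real t \<in> ball (complex_of_real T) \<delta>"
      using t tl by (auto simp: dist_norm simp flip: of_real_diff)
    then have "g (of_real w) = of_real t"
      using g(3)[of "of_real t"] s_of_real[of t] t T \<open>t \<in> {0<..<T}\<close> by simp
    moreover have "of_real t \<in> C"
      using C \<open>t \<in> {0<..<T}\<close> by auto
    ultimately show ?thesis
      using C_eq[of "of_real t"] s_of_real[of t] t T by simp
  qed
  ultimately show ?thesis
    using \<open>0 < \<epsilon>\<close> by (intro that[of \<epsilon> "b \<circ> g" "S tl"]) auto
qed

text \<open>Were S T on the circle of convergence, the local inverse of s at T would continue omega
  holomorphically across the positive point S T of that circle, which Pringsheim's theorem forbids.\<close>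

lemma S_less_conv_radius: "ereal (S t) < conv_radius a" if t: "t \<in> {0<..<R}"
proof (rule ccontr)
  assume "\<not> ereal (S t) < conv_radius a"
  then obtain \<rho> where \<rho>: "conv_radius a = ereal \<rho>" "0 < \<rho>" "\<rho> \<le> S t"
    using conv_radius_a_pos by (cases "conv_radius a") auto
  have "eventually (\<lambda>t'. t' \<in> {0<..<t}) (at_right 0)"
    using t by (auto simp: eventually_at_right_field intro!: exI[of _ t])
  then have "eventually (\<lambda>t'. S t' < \<rho> \<and> t' \<in> {0<..<t}) (at_right 0)"
    using order_tendstoD(2)[OF tendsto_S_0 \<open>0 < \<rho>\<close>] by eventually_elim auto
  then obtain t0 where t0: "S t0 < \<rho>" "t0 \<in> {0<..<t}"
    using eventually_happens'[OF trivial_limit_at_right_real] by blast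
  then obtain T where "t0 \<le> T" "T \<le> t" "S T = \<rho>"
    using S_hits_value[of t0 t \<rho>] t \<rho> by auto
  then have T: "T \<in> {0<..<R}"
    using t t0 by auto
  have "ereal (S t') < conv_radius a" if "t' \<in> {0<..<T}" for t'
    using strict_mono_onD[OF strict_mono_on_S _ T] that T \<rho> \<open>S T = \<rho>\<close> by auto
  then obtain \<epsilon> F w0 where "0 < \<epsilon>" "F holomorphic_on ball (of_real \<rho>) \<epsilon>" "w0 < \<rho>"
    "\<And>w. w0 < w \<Longrightarrow> w < \<rho> \<Longrightarrow> F (of_real w) = omega (of_real w)"
    using omega_extends_at_boundary[OF T] \<open>S T = \<rho>\<close> by metis
  then show False
    using nonneg_powser_no_holomorphic_extension[OF a_nonneg \<rho>(1,2)] by (auto simp: omega_def)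
qed

lemma omega_of_real: "omega (of_real y) = of_real (\<Sum>k. a k * y ^ k)" if "ereal \<bar>y\<bar> < conv_radius a"
proof -
  have "summable (\<lambda>k. a k * y ^ k)"
    using that by (intro summable_in_conv_radius) simp
  then show ?thesis
    by (simp add: omega_def suminf_of_real)
qed

lemma omega_has_derivative_of_real:
  "(omega has_field_derivative of_real (\<Sum>k. diffs a k * y ^ k)) (at (of_real y))"
  if "ereal \<bar>y\<bar> < conv_radius a"
proof -
  have "ereal \<bar>y\<bar> < conv_radius (diffs a)"
    using that conv_radius_diffs_ge[of a] by (rule less_le_trans)
  then have "summable (\<lambda>k. diffs a k * y ^ k)"
    by (intro summable_in_conv_radius) simp
  then have "(\<Sum>k. diffs (\<lambda>k. complex_of_real (a k)) k * of_real y ^ k) = of_real (\<Sum>k. diffs a k * y ^ k)"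
    by (simp add: diffs_of_real suminf_of_real)
  moreover have "ereal (norm (complex_of_real y)) < conv_radius (\<lambda>k. complex_of_real (a k))"
    using that conv_radius_norm[of "\<lambda>k. complex_of_real (a k)"] a_nonneg by simp
  ultimately show ?thesis
    using has_field_derivative_powser[of "of_real y" "\<lambda>k. complex_of_real (a k)" UNIV]
    by (simp add: omega_def[abs_def])
qed

lemma psd_mean_S: "S t \<in> psd_params a \<and> psd_mean a (S t) = t" if t: "t \<in> {0<..<R}"
proof -
  define P where "P = (\<Sum>k. a k * S t ^ k)"
  define P' where "P' = (\<Sum>k. diffs a k * S t ^ k)"
  define x where "x = complex_of_real t"
  have "ereal (S t) < conv_radius a" "0 < S t"
    using S_less_conv_radius[OF t] S_pos[OF t] by auto
  then have radius: "ereal \<bar>S t\<bar> < conv_radius a"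
    by simp
  obtain C where "open C" and segment_C: "of_real ` {0<..<R} \<subseteq> C" and "C \<subseteq> D - {0}"
    and C_eq: "\<And>z. z \<in> C \<Longrightarrow> omega (s z) = b z"
    using b_eq_omega_s_near_segment[OF R_pos order.refl] S_less_conv_radius by blast
  have "x \<in> C"
    using segment_C t by (auto simp: x_def)
  then have "x \<in> D - {0}"
    using \<open>C \<subseteq> D - {0}\<close> by blast
  have "((omega \<circ> s) has_field_derivative of_real P' * (s x / V x)) (at x)"
    using omega_has_derivative_of_real[OF radius] s_of_real[OF t]
    by (intro DERIV_chain s_deriv \<open>x \<in> D - {0}\<close>) (simp add: P'_def x_def)
  then have "(b has_field_derivative of_real P' * (s x / V x)) (at x)"
    using \<open>open C\<close> \<open>x \<in> C\<close> C_eq by (elim has_field_derivative_transform_within_open) auto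
  then have "b x * x / V x = of_real P' * (s x / V x)"
    using b_deriv[OF \<open>x \<in> D - {0}\<close>] by (rule DERIV_unique[rotated])
  moreover have "b x = of_real P"
    using C_eq[OF \<open>x \<in> C\<close>] omega_of_real[OF radius] s_of_real[OF t] by (simp add: P_def x_def)
  ultimately have "of_real (P * t) = complex_of_real (P' * S t)"
    using V_nz[OF \<open>x \<in> D - {0}\<close>] s_of_real[OF t] by (simp add: x_def field_simps)
  then have "P * t = P' * S t"
    by (simp only: of_real_eq_iff)
  have "P \<noteq> 0"
    using b_nz \<open>b x = of_real P\<close> \<open>x \<in> D - {0}\<close> by auto
  have "psd_mean a (S t) = S t * P' / P"
    using psd_mean_eq[where a = a, OF \<open>0 < S t\<close> \<open>ereal (S t) < conv_radius a\<close>]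
    by (simp add: P_def P'_def)
  also have "\<dots> = t"
    using \<open>P * t = P' * S t\<close> \<open>P \<noteq> 0\<close> by (metis mult.commute nonzero_mult_div_cancel_left)
  finally show ?thesis
    using \<open>ereal (S t) < conv_radius a\<close> \<open>0 < S t\<close> by (simp add: psd_params_def)
qed

lemma a_0_pos: "0 < a 0"
  using lagrange_coeff_eq_a[of 0] b_nz[OF zero_in_D] a_nonneg[of 0]
  by (simp add: lagrange_coeff_def)

lemma exists_pos_coeff: "\<exists>j \<ge> 1. 0 < a j"
proof (rule ccontr)
  assume "\<not> (\<exists>j \<ge> 1. 0 < a j)"
  then have "diffs a = (\<lambda>_. 0)"
    using a_nonneg by (force simp: diffs_def fun_eq_iff not_less order.antisym)
  moreover have "R / 2 \<in> {0<..<R}"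
    using R_pos by simp
  ultimately show False
    using psd_mean_S[of "R / 2"] psd_mean_eq[of "S (R / 2)" a] R_pos
    by (auto simp: psd_params_def)
qed

lemma psd_cov_eq_v: "psd_cov a t = v t" if "t \<in> {0<..<R}"
proof -
  obtain j where "1 \<le> j" "0 < a j"
    using exists_pos_coeff by blast
  then have "inj_on (psd_mean a) (psd_params a)"
    using a_nonneg a_0_pos by (intro strict_mono_on_imp_inj_on strict_mono_on_psd_mean) auto
  then have "psd_cov a t = S t / (S t / v t)"
    using psd_mean_S S_deriv[OF that] that by (intro psd_cov_eq[where I = "{0<..<R}"]) auto
  then show ?thesis
    using S_pos[OF that] v_pos[OF that] by simp
qed

end

theorem theorem2:
  fixes V s b :: "complex \<Rightarrow> complex" and R \<tau>0 :: real and D :: "complex set"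
  assumes "R > 0"
    and "V holomorphic_on ball 0 R"
    and "\<forall>x::real. 0 < x \<and> x < R \<longrightarrow> V (of_real x) \<in> \<real> \<and> 0 < Re (V (of_real x))"
    and "open D" and "D \<subseteq> ball 0 R" and "of_real ` {0..<R} \<subseteq> D"
    and "\<forall>z\<in>D - {0}. V z \<noteq> 0 \<and> s z \<noteq> 0 \<and> (s has_field_derivative s z / V z) (at z)"
    and "b holomorphic_on D"
    and "\<forall>z\<in>D. b z \<noteq> 0"
    and "\<forall>z\<in>D - {0}. (b has_field_derivative b z * z / V z) (at z)"
    and "\<tau>0 > 0" and "((\<lambda>z. z / s z) \<longlongrightarrow> complex_of_real \<tau>0) (at 0)"
    and "b 0 \<in> \<real> \<and> 0 \<le> Re (b 0)"
    and "\<forall>k\<ge>1. let c = (deriv ^^ k) (\<lambda>z. deriv b z * (if z = 0 then complex_of_real \<tau>0 else z / s z) ^ (k + 1)) 0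
                          / fact (k + 1)
               in c \<in> \<real> \<and> 0 \<le> Re c"
  shows "\<exists>a :: nat \<Rightarrow> real. (\<forall>k. 0 \<le> a k) \<and> conv_radius a > 0 \<and>
           (\<exists>\<epsilon>>0. \<forall>z. z \<noteq> 0 \<and> norm z < \<epsilon> \<longrightarrow> b z = (\<Sum>k. complex_of_real (a k) * s z ^ k)) \<and>
           (\<forall>x::real. 0 < x \<and> x < R \<longrightarrow>
               x \<in> psd_mean a ` psd_params a \<and> Re (V (of_real x)) = psd_cov a x)"
proof -
  interpret psd_covariance_setting V s b R \<tau>0 D
  proof
    show "lagrange_coeff b (\<lambda>z. if z = 0 then of_real \<tau>0 else z / s z) n \<in> \<real> \<and>
        0 \<le> Re (lagrange_coeff b (\<lambda>z. if z = 0 then of_real \<tau>0 else z / s z) n)" if "2 \<le> n" for n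
      using assms(14)[rule_format, of "n - 1"] that by (simp add: lagrange_coeff_def Let_def)
  qed (use assms in auto)
  show ?thesis
  proof (intro exI[of _ a] conjI allI impI)
    obtain \<epsilon> where "0 < \<epsilon>"
      and "\<And>z. z \<noteq> 0 \<Longrightarrow> norm z < \<epsilon> \<Longrightarrow> (\<lambda>n. of_real (a n) * s z ^ n) sums b z"
      using b_expansion by metis
    then show "\<exists>\<epsilon>>0. \<forall>z. z \<noteq> 0 \<and> norm z < \<epsilon> \<longrightarrow> b z = (\<Sum>k. of_real (a k) * s z ^ k)"
      by (auto simp: sums_iff)
    fix x :: real
    assume "0 < x \<and> x < R"
    then have x: "x \<in> {0<..<R}"
      by simp
    show "x \<in> psd_mean a ` psd_params a"
      using psd_mean_S[OF x] by (metis image_eqI)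
    show "Re (V (of_real x)) = psd_cov a x"
      using psd_cov_eq_v[OF x] by (simp add: v_def)
  qed (use a_nonneg conv_radius_a_pos in auto)
qed

end
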